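(* Suppose Assumption D holds, let $x$ be an allocation rule satisfying Assumption X, and let $\mathcal{T}$ be the class of winner-favored transfers. Define $$t_i^w(\theta)=t_i^l(\theta)=\theta X_i^{\min}(\theta)-\int_{\underline\theta}^{\theta}X_i^{\min}(z)\,dz,\qquad t_i^*(\theta,\theta')=t_i^w(\theta)x_i(\theta,\theta')+t_i^l(\theta)(1-x_i(\theta,\theta')).$$ Then $t^*$ is the unique solution to the Reduced Problem (R), and hence a solution to the Optimal Transfer Problem (P), where: (P) is to maximize $\sum_i\int_\Theta T_i(\theta)dP(\theta)$ over transfer rules $t$ with $(x,t)$ feasible and $t\in\mathcal{T}$; (R) is to maximize the same objective over transfer rules $t$ that are win-lose dependent, satisfy $U_i^{\min}(\theta)=\int_{\underline\theta}^{\theta}X_i^{\min}(z)dz$ for all $i,\theta$, and $t\in\mathcal{T}$.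
   Context: $\Theta=[\underline\theta,\bar\theta]$ with $0<\underline\theta<\bar\theta$, Borel $\sigma$-algebra $\mathcal{B}$; "$\sigma$-algebra" means sub-$\sigma$-algebra of $\mathcal{B}$; $\Delta(\Theta,\mathcal{A})$ is the set of probability measures on $(\Theta,\mathcal{A})$; $P_{\mathcal{E}}$ is the restriction of $P$ to $\mathcal{E}$. A divergence $D$ assigns to each pair $Q,P$ of probability measures on a common $\sigma$-algebra a value $D(Q\|P)\in[0,\infty]$. Assumption D: for every $\sigma$-algebra $\mathcal{A}$, $P,Q\in\Delta(\Theta,\mathcal{A})$: (D1) $D(Q\|P)=0$ if $Q=P$; (D2) if $Q\ll P$ with bounded $dQ/dP$, $\epsilon\mapsto D(\epsilon Q+(1-\epsilon)P\|P)$ is continuous on $[0,1]$; (D3) $D(Q\|P)<\infty\Rightarrow Q\ll P$; (D4) $D(Q_{\mathcal{E}}\|P_{\mathcal{E}})\le D(Q\|P)$ for sub-$\sigma$-algebras $\mathcal{E}\subset\mathcal{A}$; (D5) equality in (D4) when $dQ_{\mathcal{E}}/dP_{\mathcal{E}}=dQ/dP$ $P$-a.e. Fix atomless $P\in\Delta(\Theta,\mathcal{B})$, $\eta>0$. Two bidders $i\in\{1,2\}$. An allocation rule is bounded measurable $x=(x_1,x_2):\Theta^2\to\mathbb{R}^2$ with $x_1(\theta,\theta')\ge0$, $x_2(\theta',\theta)\ge0$, $x_1(\theta,\theta')+x_2(\theta',\theta)\le1$; a transfer rule is bounded measurable $t=(t_1,t_2):\Theta^2\to\mathbb{R}^2$.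 $X_i(\theta)=\int x_i(\theta,\theta')dP(\theta')$, $X_i^{\min}(\theta)=\inf_Q\{\int x_i(\theta,\theta')dQ(\theta'):D(Q\|P)\le\eta\}$, $U_i^{\min}(\theta)=\inf_Q\{\int[\theta x_i(\theta,\theta')-t_i(\theta,\theta')]dQ(\theta'):D(Q\|P)\le\eta\}$, $T_i(\theta)=\int t_i(\theta,\theta')dP(\theta')$, $Q$ over $\Delta(\Theta,\mathcal{B})$. $(x,t)$ is incentive compatible if for all $i,\theta$, $\theta\in\arg\max_{\hat\theta}\inf_Q\{\int[\theta x_i(\hat\theta,\theta')-t_i(\hat\theta,\theta')]dQ(\theta'):D(Q\|P)\le\eta\}$; individually rational if $U_i^{\min}\ge0$; feasible if both. Assumption X: (i) $x_i(\theta,\theta')\in\{0,1\}$ for $\theta'\ne\theta$; (ii) $X_i(\theta)=1\Rightarrow\theta=\bar\theta$; (iii) $X_i^{\min}$ non-decreasing. $t$ is a winner-favored transfer if for every $i$, every $\theta<\bar\theta$ and all $\theta^w,\theta^l$ with $x_i(\theta,\theta^w)=1$ and $x_i(\theta,\theta^l)=0$, $t_i(\theta,\theta^w)\le t_i(\theta,\theta^l)$. $t$ is win-lose dependent if there exist $t_i^w,t_i^l:\Theta\to\mathbb{R}$ with $t_i(\theta,\theta')=t_i^w(\theta)x_i(\theta,\theta')+t_i^l(\theta)[1-x_i(\theta,\theta')]$ and $\theta-t_i^w(\theta)\ge-t_i^l(\theta)$ for all $i,\theta,\theta'$. *)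

theory Defs
  imports "HOL-Probability.Probability"
begin

definition Theta :: "real \<Rightarrow> real \<Rightarrow> real set" where
  "Theta lo hi = {lo..hi}"

definition BTheta :: "real \<Rightarrow> real \<Rightarrow> real set set" where
  "BTheta lo hi = sets (restrict_space borel (Theta lo hi))"

definition sub_sigma :: "real \<Rightarrow> real \<Rightarrow> real set set \<Rightarrow> bool" where
  "sub_sigma lo hi A \<longleftrightarrow> sigma_algebra (Theta lo hi) A \<and> A \<subseteq> BTheta lo hi"

definition Delta :: "real \<Rightarrow> real \<Rightarrow> real set set \<Rightarrow> real measure set" where
  "Delta lo hi A = {Q. prob_space Q \<and> space Q = Theta lo hi \<and> sets Q = A}"

definition restr :: "real measure \<Rightarrow> real set set \<Rightarrow> real measure" where
  "restr Q E = measure_of (space Q) E (emeasure Q)"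

definition mix :: "real \<Rightarrow> real measure \<Rightarrow> real measure \<Rightarrow> real measure" where
  "mix e Q P = measure_of (space P) (sets P)
      (\<lambda>S. ennreal e * emeasure Q S + ennreal (1 - e) * emeasure P S)"

definition assumption_D :: "real \<Rightarrow> real \<Rightarrow> (real measure \<Rightarrow> real measure \<Rightarrow> ennreal) \<Rightarrow> bool" where
  "assumption_D lo hi D \<longleftrightarrow>
    (\<forall>A P Q. sub_sigma lo hi A \<longrightarrow> P \<in> Delta lo hi A \<longrightarrow> Q \<in> Delta lo hi A \<longrightarrow>
      (Q = P \<longrightarrow> D Q P = 0) \<and>
      ((\<exists>f C. f \<in> borel_measurable P \<and> (\<forall>\<theta>\<in>space P. f \<theta> \<le> ennreal C) \<and> Q = density P f)
         \<longrightarrow> continuous_on {0..1} (\<lambda>e. D (mix e Q P) P)) \<and>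
      (D Q P < top \<longrightarrow> absolutely_continuous P Q) \<and>
      (\<forall>E. sub_sigma lo hi E \<longrightarrow> E \<subseteq> A \<longrightarrow>
          D (restr Q E) (restr P E) \<le> D Q P \<and>
          ((absolutely_continuous P Q \<and>
            (AE \<theta> in P. RN_deriv (restr P E) (restr Q E) \<theta> = RN_deriv P Q \<theta>))
             \<longrightarrow> D (restr Q E) (restr P E) = D Q P)))"

definition atomless :: "'a measure \<Rightarrow> bool" where
  "atomless M \<longleftrightarrow> (\<forall>A\<in>sets M. 0 < emeasure M A \<longrightarrow>
      (\<exists>B\<in>sets M. B \<subseteq> A \<and> 0 < emeasure M B \<and> emeasure M B < emeasure M A))"

definition ambiguity_set ::
  "real \<Rightarrow> real \<Rightarrow> (real measure \<Rightarrow> real measure \<Rightarrow> ennreal) \<Rightarrow> real measure \<Rightarrow> real \<Rightarrow> real measure set" where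
  "ambiguity_set lo hi D P \<eta> = {Q \<in> Delta lo hi (BTheta lo hi). D Q P \<le> ennreal \<eta>}"

definition worst ::
  "real \<Rightarrow> real \<Rightarrow> (real measure \<Rightarrow> real measure \<Rightarrow> ennreal) \<Rightarrow> real measure \<Rightarrow> real \<Rightarrow> (real \<Rightarrow> real) \<Rightarrow> real" where
  "worst lo hi D P \<eta> g = (INF Q \<in> ambiguity_set lo hi D P \<eta>. \<integral>\<theta>'. g \<theta>' \<partial>Q)"

definition Xbar :: "real measure \<Rightarrow> (nat \<Rightarrow> real \<Rightarrow> real \<Rightarrow> real) \<Rightarrow> nat \<Rightarrow> real \<Rightarrow> real" where
  "Xbar P x i \<theta> = (\<integral>\<theta>'. x i \<theta> \<theta>' \<partial>P)"

definition Tbar :: "real measure \<Rightarrow> (nat \<Rightarrow> real \<Rightarrow> real \<Rightarrow> real) \<Rightarrow> nat \<Rightarrow> real \<Rightarrow> real" where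
  "Tbar P t i \<theta> = (\<integral>\<theta>'. t i \<theta> \<theta>' \<partial>P)"

definition Xmin ::
  "real \<Rightarrow> real \<Rightarrow> (real measure \<Rightarrow> real measure \<Rightarrow> ennreal) \<Rightarrow> real measure \<Rightarrow> real \<Rightarrow>
   (nat \<Rightarrow> real \<Rightarrow> real \<Rightarrow> real) \<Rightarrow> nat \<Rightarrow> real \<Rightarrow> real" where
  "Xmin lo hi D P \<eta> x i \<theta> = worst lo hi D P \<eta> (\<lambda>\<theta>'. x i \<theta> \<theta>')"

definition Umin ::
  "real \<Rightarrow> real \<Rightarrow> (real measure \<Rightarrow> real measure \<Rightarrow> ennreal) \<Rightarrow> real measure \<Rightarrow> real \<Rightarrow>
   (nat \<Rightarrow> real \<Rightarrow> real \<Rightarrow> real) \<Rightarrow> (nat \<Rightarrow> real \<Rightarrow> real \<Rightarrow> real) \<Rightarrow> nat \<Rightarrow> real \<Rightarrow> real" where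
  "Umin lo hi D P \<eta> x t i \<theta> = worst lo hi D P \<eta> (\<lambda>\<theta>'. \<theta> * x i \<theta> \<theta>' - t i \<theta> \<theta>')"

definition bounded_measurable_rule :: "real \<Rightarrow> real \<Rightarrow> (nat \<Rightarrow> real \<Rightarrow> real \<Rightarrow> real) \<Rightarrow> bool" where
  "bounded_measurable_rule lo hi f \<longleftrightarrow>
    (\<forall>i\<in>{1,2}. (\<lambda>z. f i (fst z) (snd z)) \<in> borel_measurable
        (restrict_space borel (Theta lo hi) \<Otimes>\<^sub>M restrict_space borel (Theta lo hi)) \<and>
      (\<exists>C. \<forall>\<theta>\<in>Theta lo hi. \<forall>\<theta>'\<in>Theta lo hi. \<bar>f i \<theta> \<theta>'\<bar> \<le> C))"

definition allocation_rule :: "real \<Rightarrow> real \<Rightarrow> (nat \<Rightarrow> real \<Rightarrow> real \<Rightarrow> real) \<Rightarrow> bool" where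
  "allocation_rule lo hi x \<longleftrightarrow> bounded_measurable_rule lo hi x \<and>
    (\<forall>\<theta>\<in>Theta lo hi. \<forall>\<theta>'\<in>Theta lo hi.
       x 1 \<theta> \<theta>' \<ge> 0 \<and> x 2 \<theta>' \<theta> \<ge> 0 \<and> x 1 \<theta> \<theta>' + x 2 \<theta>' \<theta> \<le> 1)"

definition transfer_rule :: "real \<Rightarrow> real \<Rightarrow> (nat \<Rightarrow> real \<Rightarrow> real \<Rightarrow> real) \<Rightarrow> bool" where
  "transfer_rule lo hi t \<longleftrightarrow> bounded_measurable_rule lo hi t"

definition incentive_compatible ::
  "real \<Rightarrow> real \<Rightarrow> (real measure \<Rightarrow> real measure \<Rightarrow> ennreal) \<Rightarrow> real measure \<Rightarrow> real \<Rightarrow>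
   (nat \<Rightarrow> real \<Rightarrow> real \<Rightarrow> real) \<Rightarrow> (nat \<Rightarrow> real \<Rightarrow> real \<Rightarrow> real) \<Rightarrow> bool" where
  "incentive_compatible lo hi D P \<eta> x t \<longleftrightarrow>
    (\<forall>i\<in>{1,2}. \<forall>\<theta>\<in>Theta lo hi. \<forall>\<theta>h\<in>Theta lo hi.
       worst lo hi D P \<eta> (\<lambda>\<theta>'. \<theta> * x i \<theta>h \<theta>' - t i \<theta>h \<theta>')
         \<le> worst lo hi D P \<eta> (\<lambda>\<theta>'. \<theta> * x i \<theta> \<theta>' - t i \<theta> \<theta>'))"

definition individually_rational ::
  "real \<Rightarrow> real \<Rightarrow> (real measure \<Rightarrow> real measure \<Rightarrow> ennreal) \<Rightarrow> real measure \<Rightarrow> real \<Rightarrow>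
   (nat \<Rightarrow> real \<Rightarrow> real \<Rightarrow> real) \<Rightarrow> (nat \<Rightarrow> real \<Rightarrow> real \<Rightarrow> real) \<Rightarrow> bool" where
  "individually_rational lo hi D P \<eta> x t \<longleftrightarrow>
    (\<forall>i\<in>{1,2}. \<forall>\<theta>\<in>Theta lo hi. Umin lo hi D P \<eta> x t i \<theta> \<ge> 0)"

definition feasible ::
  "real \<Rightarrow> real \<Rightarrow> (real measure \<Rightarrow> real measure \<Rightarrow> ennreal) \<Rightarrow> real measure \<Rightarrow> real \<Rightarrow>
   (nat \<Rightarrow> real \<Rightarrow> real \<Rightarrow> real) \<Rightarrow> (nat \<Rightarrow> real \<Rightarrow> real \<Rightarrow> real) \<Rightarrow> bool" where
  "feasible lo hi D P \<eta> x t \<longleftrightarrow>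
    incentive_compatible lo hi D P \<eta> x t \<and> individually_rational lo hi D P \<eta> x t"

definition assumption_X ::
  "real \<Rightarrow> real \<Rightarrow> (real measure \<Rightarrow> real measure \<Rightarrow> ennreal) \<Rightarrow> real measure \<Rightarrow> real \<Rightarrow>
   (nat \<Rightarrow> real \<Rightarrow> real \<Rightarrow> real) \<Rightarrow> bool" where
  "assumption_X lo hi D P \<eta> x \<longleftrightarrow>
    (\<forall>i\<in>{1,2}. \<forall>\<theta>\<in>Theta lo hi. \<forall>\<theta>'\<in>Theta lo hi. \<theta>' \<noteq> \<theta> \<longrightarrow> x i \<theta> \<theta>' \<in> {0, 1}) \<and>
    (\<forall>i\<in>{1,2}. \<forall>\<theta>\<in>Theta lo hi. Xbar P x i \<theta> = 1 \<longrightarrow> \<theta> = hi) \<and>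
    (\<forall>i\<in>{1,2}. mono_on (Theta lo hi) (Xmin lo hi D P \<eta> x i))"

definition winner_favored ::
  "real \<Rightarrow> real \<Rightarrow> (nat \<Rightarrow> real \<Rightarrow> real \<Rightarrow> real) \<Rightarrow> (nat \<Rightarrow> real \<Rightarrow> real \<Rightarrow> real) \<Rightarrow> bool" where
  "winner_favored lo hi x t \<longleftrightarrow>
    (\<forall>i\<in>{1,2}. \<forall>\<theta>\<in>Theta lo hi. \<forall>\<theta>w\<in>Theta lo hi. \<forall>\<theta>l\<in>Theta lo hi.
       \<theta> < hi \<longrightarrow> x i \<theta> \<theta>w = 1 \<longrightarrow> x i \<theta> \<theta>l = 0 \<longrightarrow> t i \<theta> \<theta>w \<le> t i \<theta> \<theta>l)"

definition win_lose_dependent ::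
  "real \<Rightarrow> real \<Rightarrow> (nat \<Rightarrow> real \<Rightarrow> real \<Rightarrow> real) \<Rightarrow> (nat \<Rightarrow> real \<Rightarrow> real \<Rightarrow> real) \<Rightarrow> bool" where
  "win_lose_dependent lo hi x t \<longleftrightarrow>
    (\<exists>tw tl :: nat \<Rightarrow> real \<Rightarrow> real.
       \<forall>i\<in>{1,2}. \<forall>\<theta>\<in>Theta lo hi. \<forall>\<theta>'\<in>Theta lo hi.
         t i \<theta> \<theta>' = tw i \<theta> * x i \<theta> \<theta>' + tl i \<theta> * (1 - x i \<theta> \<theta>') \<and>
         \<theta> - tw i \<theta> \<ge> - tl i \<theta>)"

definition objective :: "real measure \<Rightarrow> (nat \<Rightarrow> real \<Rightarrow> real \<Rightarrow> real) \<Rightarrow> real" where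
  "objective P t = (\<Sum>i\<in>{1::nat,2}. \<integral>\<theta>. Tbar P t i \<theta> \<partial>P)"

definition admissible_P ::
  "real \<Rightarrow> real \<Rightarrow> (real measure \<Rightarrow> real measure \<Rightarrow> ennreal) \<Rightarrow> real measure \<Rightarrow> real \<Rightarrow>
   (nat \<Rightarrow> real \<Rightarrow> real \<Rightarrow> real) \<Rightarrow> (nat \<Rightarrow> real \<Rightarrow> real \<Rightarrow> real) \<Rightarrow> bool" where
  "admissible_P lo hi D P \<eta> x t \<longleftrightarrow>
    transfer_rule lo hi t \<and> feasible lo hi D P \<eta> x t \<and> winner_favored lo hi x t"

definition solves_P ::
  "real \<Rightarrow> real \<Rightarrow> (real measure \<Rightarrow> real measure \<Rightarrow> ennreal) \<Rightarrow> real measure \<Rightarrow> real \<Rightarrow>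
   (nat \<Rightarrow> real \<Rightarrow> real \<Rightarrow> real) \<Rightarrow> (nat \<Rightarrow> real \<Rightarrow> real \<Rightarrow> real) \<Rightarrow> bool" where
  "solves_P lo hi D P \<eta> x t \<longleftrightarrow> admissible_P lo hi D P \<eta> x t \<and>
    (\<forall>t'. admissible_P lo hi D P \<eta> x t' \<longrightarrow> objective P t' \<le> objective P t)"

definition admissible_R ::
  "real \<Rightarrow> real \<Rightarrow> (real measure \<Rightarrow> real measure \<Rightarrow> ennreal) \<Rightarrow> real measure \<Rightarrow> real \<Rightarrow>
   (nat \<Rightarrow> real \<Rightarrow> real \<Rightarrow> real) \<Rightarrow> (nat \<Rightarrow> real \<Rightarrow> real \<Rightarrow> real) \<Rightarrow> bool" where
  "admissible_R lo hi D P \<eta> x t \<longleftrightarrow>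
    transfer_rule lo hi t \<and> win_lose_dependent lo hi x t \<and>
    (\<forall>i\<in>{1,2}. \<forall>\<theta>\<in>Theta lo hi.
       Umin lo hi D P \<eta> x t i \<theta> = integral {lo..\<theta>} (Xmin lo hi D P \<eta> x i)) \<and>
    winner_favored lo hi x t"

definition solves_R ::
  "real \<Rightarrow> real \<Rightarrow> (real measure \<Rightarrow> real measure \<Rightarrow> ennreal) \<Rightarrow> real measure \<Rightarrow> real \<Rightarrow>
   (nat \<Rightarrow> real \<Rightarrow> real \<Rightarrow> real) \<Rightarrow> (nat \<Rightarrow> real \<Rightarrow> real \<Rightarrow> real) \<Rightarrow> bool" where
  "solves_R lo hi D P \<eta> x t \<longleftrightarrow> admissible_R lo hi D P \<eta> x t \<and>
    (\<forall>t'. admissible_R lo hi D P \<eta> x t' \<longrightarrow> objective P t' \<le> objective P t)"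

definition tstar_w ::
  "real \<Rightarrow> real \<Rightarrow> (real measure \<Rightarrow> real measure \<Rightarrow> ennreal) \<Rightarrow> real measure \<Rightarrow> real \<Rightarrow>
   (nat \<Rightarrow> real \<Rightarrow> real \<Rightarrow> real) \<Rightarrow> nat \<Rightarrow> real \<Rightarrow> real" where
  "tstar_w lo hi D P \<eta> x i \<theta> = \<theta> * Xmin lo hi D P \<eta> x i \<theta> - integral {lo..\<theta>} (Xmin lo hi D P \<eta> x i)"

definition tstar_l ::
  "real \<Rightarrow> real \<Rightarrow> (real measure \<Rightarrow> real measure \<Rightarrow> ennreal) \<Rightarrow> real measure \<Rightarrow> real \<Rightarrow>
   (nat \<Rightarrow> real \<Rightarrow> real \<Rightarrow> real) \<Rightarrow> nat \<Rightarrow> real \<Rightarrow> real" where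
  "tstar_l lo hi D P \<eta> x i \<theta> = \<theta> * Xmin lo hi D P \<eta> x i \<theta> - integral {lo..\<theta>} (Xmin lo hi D P \<eta> x i)"

definition tstar ::
  "real \<Rightarrow> real \<Rightarrow> (real measure \<Rightarrow> real measure \<Rightarrow> ennreal) \<Rightarrow> real measure \<Rightarrow> real \<Rightarrow>
   (nat \<Rightarrow> real \<Rightarrow> real \<Rightarrow> real) \<Rightarrow> nat \<Rightarrow> real \<Rightarrow> real \<Rightarrow> real" where
  "tstar lo hi D P \<eta> x i \<theta> \<theta>' =
     tstar_w lo hi D P \<eta> x i \<theta> * x i \<theta> \<theta>' + tstar_l lo hi D P \<eta> x i \<theta> * (1 - x i \<theta> \<theta>')"

end

theory Submission
  imports Defs
begin

text \<open>
  Incentive compatibility and individual rationality give the envelope bound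
  \<open>Umin(\<theta>) \<ge> \<integral>\<^bsub>[lo,\<theta>]\<^esub> Xmin\<close> for every feasible transfer, and the reduced problem imposes
  it with equality. Conversely, for a winner-favored transfer and \<open>\<theta> < hi\<close> we have
  \<open>Umin(\<theta>) + Tbar(\<theta>) \<le> \<theta> Xmin(\<theta>)\<close>: if a belief \<open>Q\<close> puts less mass than \<open>P\<close> on the
  winning set, its coarsening (constant densities on the winning and on the losing set) is again
  admissible by (D4) and (D5), and since winners pay no more than losers it leaves the bidder at most
  \<open>\<theta> Q(win) - Tbar(\<theta>)\<close>. Hence \<open>Tbar \<le> t\<^sup>w\<close> almost everywhere, with equality for \<open>t\<^sup>*\<close>, which
  is feasible because \<open>\<integral> Xmin\<close> is convex. A win-lose dependent transfer with the same revenue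
  has \<open>Tbar = t\<^sup>w\<close> almost everywhere, which forces \<open>t\<^sup>w = t\<^sup>l\<close> unless \<open>Xmin = Xbar\<close>; by (D2)
  the latter only happens where the winning probability is \<open>0\<close> (the bidder loses almost surely)
  or \<open>1\<close> (then \<open>\<theta> = hi\<close>, a null type).
\<close>

lemma separating_value:
  fixes A B :: "'a::conditionally_complete_linorder set"
  assumes "bdd_above A" "bdd_below B" "\<And>a b. a \<in> A \<Longrightarrow> b \<in> B \<Longrightarrow> a \<le> b"
  obtains c where "\<And>a. a \<in> A \<Longrightarrow> a \<le> c" "\<And>b. b \<in> B \<Longrightarrow> c \<le> b"
proof (cases "A = {}")
  case True
  then show ?thesis using assms(2) that unfolding bdd_below_def by blast
next
  case False
  show ?thesis
  proof (rule that[of "Sup A"])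
    show "a \<le> Sup A" if "a \<in> A" for a using cSup_upper[OF that assms(1)] .
    show "Sup A \<le> b" if "b \<in> B" for b using cSup_least[OF False] assms(3) that by blast
  qed
qed

lemma integral_le_increment_partition:
  fixes F f :: "real \<Rightarrow> real" and a b :: real and n :: nat
  assumes "a \<le> b" "n > 0" and mono: "mono_on {a..b} f"
    and inc: "\<And>r s. a \<le> r \<Longrightarrow> r \<le> s \<Longrightarrow> s \<le> b \<Longrightarrow> (s - r) * f r \<le> F s - F r"
  shows "integral {a..b} f - (b - a) / n * (f b - f a) \<le> F b - F a"
proof -
  define h where "h = (b - a) / n"
  define p where "p k = a + real k * h" for k :: nat
  have h0: "0 \<le> h" using assms by (simp add: h_def)
  have pn: "p n = b" using assms by (simp add: p_def h_def)
  have pmono: "p k \<le> p m" if "k \<le> m" for k m using that h0 by (simp add: p_def mult_right_mono)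
  have pa: "a \<le> p k" for k using h0 by (simp add: p_def)
  have pb: "p k \<le> b" if "k \<le> n" for k using pmono[OF that] pn by simp
  have intg: "f integrable_on {c..d}" if "a \<le> c" "d \<le> b" for c d
    using integrable_on_mono_on mono_on_subset[OF mono] that by auto
  have "k \<le> n \<Longrightarrow> integral {a..p k} f - h * (f (p k) - f a) \<le> F (p k) - F a" for k
  proof (induction k)
    case 0
    then show ?case by (simp add: p_def)
  next
    case (Suc k)
    have step: "p (Suc k) - p k = h" by (simp add: p_def algebra_simps)
    have bounds: "a \<le> p k" "p k \<le> p (Suc k)" "p (Suc k) \<le> b"
      using pa pmono[of k "Suc k"] pb[OF Suc.prems] by auto
    have inc_k: "h * f (p k) \<le> F (p (Suc k)) - F (p k)"
      using inc[of "p k" "p (Suc k)"] bounds step by simp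
    have split: "integral {a..p k} f + integral {p k..p (Suc k)} f = integral {a..p (Suc k)} f"
      by (rule Henstock_Kurzweil_Integration.integral_combine) (use bounds intg[of a "p (Suc k)"] in auto)
    have "integral {p k..p (Suc k)} f \<le> integral {p k..p (Suc k)} (\<lambda>_. f (p (Suc k)))"
      by (rule integral_le) (use intg bounds mono_onD[OF mono] in auto)
    then have "integral {p k..p (Suc k)} f \<le> h * f (p (Suc k))"
      using bounds step by simp
    then show ?case using Suc.IH Suc.prems inc_k split unfolding right_diff_distrib by simp
  qed
  from this[of n] show ?thesis using pn by (simp add: h_def)
qed

lemma integral_le_diff_of_increments:
  fixes F f :: "real \<Rightarrow> real" and a b :: real
  assumes "a \<le> b" and "mono_on {a..b} f"
    and "\<And>r s. a \<le> r \<Longrightarrow> r \<le> s \<Longrightarrow> s \<le> b \<Longrightarrow> (s - r) * f r \<le> F s - F r"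
  shows "integral {a..b} f \<le> F b - F a"
proof -
  have "(\<lambda>n. integral {a..b} f - (b - a) / real n * (f b - f a))
          \<longlonglongrightarrow> integral {a..b} f - 0 * (f b - f a)"
    by (intro tendsto_intros lim_const_over_n)
  moreover have "\<forall>\<^sub>F n in sequentially. integral {a..b} f - (b - a) / real n * (f b - f a) \<le> F b - F a"
    using eventually_gt_at_top[of 0]
    by eventually_elim (rule integral_le_increment_partition[OF assms(1) _ assms(2,3)])
  ultimately show ?thesis by (simp add: Lim_bounded2 tendsto_upperbound)
qed

lemma emeasure_density_two_step:
  fixes N :: "'a measure"
  assumes "W \<in> sets N" "L \<in> sets N" "A \<in> sets N" "0 \<le> a" "0 \<le> b"
  shows "emeasure (density N (\<lambda>y. ennreal (a * indicator W y + b * indicator L y))) A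
     = ennreal a * emeasure N (W \<inter> A) + ennreal b * emeasure N (L \<inter> A)"
proof -
  have "emeasure (density N (\<lambda>y. ennreal (a * indicator W y + b * indicator L y))) A
     = (\<integral>\<^sup>+y. ennreal a * indicator (W \<inter> A) y + ennreal b * indicator (L \<inter> A) y \<partial>N)"
    using assms by (subst emeasure_density) (auto intro!: nn_integral_cong split: split_indicator)
  also have "\<dots> = ennreal a * emeasure N (W \<inter> A) + ennreal b * emeasure N (L \<inter> A)"
    using assms by (simp add: nn_integral_add nn_integral_cmult_indicator sets.Int)
  finally show ?thesis .
qed

lemma emeasure_density_mixture:
  fixes N :: "'a measure"
  assumes f: "f \<in> borel_measurable N" and A: "A \<in> sets N"
  shows "emeasure (density N (\<lambda>y. ennreal e * f y + ennreal (1 - e))) A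
     = ennreal e * emeasure (density N f) A + ennreal (1 - e) * emeasure N A"
proof -
  have "emeasure (density N (\<lambda>y. ennreal e * f y + ennreal (1 - e))) A
      = (\<integral>\<^sup>+y. ennreal e * (f y * indicator A y) + ennreal (1 - e) * indicator A y \<partial>N)"
    using f A by (subst emeasure_density) (auto intro!: nn_integral_cong simp: distrib_right mult.assoc)
  also have "\<dots> = ennreal e * emeasure (density N f) A + ennreal (1 - e) * emeasure N A"
    using f A by (simp add: nn_integral_add nn_integral_cmult emeasure_density)
  finally show ?thesis .
qed

lemma mix_density:
  fixes N :: "real measure"
  assumes "f \<in> borel_measurable N"
  shows "mix e (density N f) N = density N (\<lambda>y. ennreal e * f y + ennreal (1 - e))"
proof -
  have "mix e (density N f) N = measure_of (space N) (sets N)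
      (emeasure (density N (\<lambda>y. ennreal e * f y + ennreal (1 - e))))"
    unfolding mix_def
    by (intro measure_of_eq sets.space_closed)
       (simp add: sets.sigma_sets_eq emeasure_density_mixture[OF assms])
  also have "\<dots> = density N (\<lambda>y. ennreal e * f y + ennreal (1 - e))"
    using measure_of_of_measure[of "density N _"] by simp
  finally show ?thesis .
qed

lemma emeasure_mix_density:
  fixes N :: "real measure"
  assumes "f \<in> borel_measurable N" "A \<in> sets N"
  shows "emeasure (mix e (density N f) N) A
    = ennreal e * emeasure (density N f) A + ennreal (1 - e) * emeasure N A"
  using emeasure_density_mixture[OF assms] by (simp add: mix_density[OF assms(1)])

lemma RN_deriv_restr_two_step:
  fixes N :: "real measure"
  assumes N: "finite_measure N" and W: "W \<in> sets N" and ab: "0 \<le> a" "0 \<le> b"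
  defines "E \<equiv> {{}, W, space N - W, space N}"
    and "h \<equiv> \<lambda>y. ennreal (a * indicator W y + b * indicator (space N - W) y)"
  shows "AE y in N. RN_deriv (restr N E) (restr (density N h) E) y = RN_deriv N (density N h) y"
proof -
  interpret N: finite_measure N by (rule N)
  define F where "F = sigma (space N) E"
  have sa: "sigma_algebra (space N) E"
    unfolding E_def by (rule sigma_algebra_single_set[OF sets.sets_into_space[OF W]])
  have EN: "E \<subseteq> sets N" using W by (auto simp: E_def)
  have sets_F: "sets F = E" and space_F: "space F = space N"
    using sa sets.space_closed[of N] EN
    by (auto simp: F_def sigma_algebra.sigma_sets_eq)
  have subN: "subalgebra N F" and subQ: "subalgebra (density N h) F"
    using sets_F space_F EN by (auto simp: subalgebra_def)
  have restr_eq: "restr M E = restr_to_subalg M F" for M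
    by (simp add: restr_def restr_to_subalg_def sets_F)
  define NE where "NE = restr_to_subalg N F"
  interpret NE: finite_measure NE
    unfolding NE_def by (rule finite_measure_restr_to_subalg[OF subN N])
  have sets_NE: "sets NE = E" using sets_restr_to_subalg[OF subN] sets_F by (simp add: NE_def)
  have WL: "W \<in> sets NE" "space N - W \<in> sets NE" using sets_NE by (auto simp: E_def)
  have hN: "h \<in> borel_measurable N" and hNE: "h \<in> borel_measurable NE"
    unfolding h_def using W WL by measurable
  have "density NE h = restr_to_subalg (density N h) F"
  proof (rule measure_eqI)
    show "sets (density NE h) = sets (restr_to_subalg (density N h) F)"
      using sets_restr_to_subalg[OF subQ] sets_NE sets_F by simp
    fix A assume "A \<in> sets (density NE h)"
    then have A: "A \<in> sets NE" "A \<in> sets F" "A \<in> sets N" using sets_NE sets_F EN by auto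
    have "W \<inter> A \<in> sets F" "(space N - W) \<inter> A \<in> sets F"
      using WL A(1) sets_NE sets_F by (metis sets.Int)+
    then have "emeasure (density NE h) A
        = ennreal a * emeasure N (W \<inter> A) + ennreal b * emeasure N ((space N - W) \<inter> A)"
      using emeasure_density_two_step[OF WL A(1) ab] emeasure_restr_to_subalg[OF subN]
      by (simp add: h_def NE_def)
    also have "\<dots> = emeasure (restr_to_subalg (density N h) F) A"
      using emeasure_density_two_step[OF W _ A(3) ab, of "space N - W"] W
        emeasure_restr_to_subalg[OF subQ A(2)]
      by (simp add: h_def)
    finally show "emeasure (density NE h) A = emeasure (restr_to_subalg (density N h) F) A" .
  qed
  then have "AE y in NE. h y = RN_deriv NE (restr_to_subalg (density N h) F) y"
    by (rule NE.RN_deriv_unique[OF hNE])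
  then have "AE y in N. h y = RN_deriv (restr N E) (restr (density N h) E) y"
    using AE_restr_to_subalg[OF subN] unfolding NE_def restr_eq by blast
  moreover have "AE y in N. h y = RN_deriv N (density N h) y"
    by (rule N.RN_deriv_unique[OF hN refl])
  ultimately show ?thesis by eventually_elim simp
qed

lemma emeasure_coarsening:
  fixes P Q :: "'a measure"
  assumes P: "prob_space P" and Q: "prob_space Q" and sets_Q: "sets Q = sets P"
    and W: "W \<in> sets P" and pW: "0 < measure P W" "measure P W < 1"
    and A: "A \<in> {{}, W, space P - W, space P}"
  defines "a \<equiv> measure Q W / measure P W" and "b \<equiv> (1 - measure Q W) / (1 - measure P W)"
  shows "emeasure (density P (\<lambda>y. ennreal (a * indicator W y + b * indicator (space P - W) y))) A
    = emeasure Q A"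
proof -
  interpret P: prob_space P by (rule P)
  interpret Q: prob_space Q by (rule Q)
  define L where "L = space P - W"
  have space_Q: "space Q = space P" using sets_eq_imp_space_eq[OF sets_Q] .
  have ab: "0 \<le> a" "0 \<le> b" using pW Q.prob_le_1 by (auto simp: a_def b_def)
  have L: "L \<in> sets P" using W by (auto simp: L_def)
  have PL: "measure P L = 1 - measure P W" and QL: "measure Q L = 1 - measure Q W"
    using P.prob_compl[OF W] Q.prob_compl[of W] W by (simp_all add: L_def space_Q sets_Q)
  have aW: "a * measure P W = measure Q W" and bL: "b * measure P L = measure Q L"
    using pW by (simp_all add: a_def b_def PL QL)
  have "A \<in> sets P" and disj: "W \<inter> L = {}" "L \<inter> W = {}" and sub: "W \<subseteq> space P" "L \<subseteq> space P"
    using A W sets.sets_into_space[OF W] by (auto simp: L_def)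
  then have "emeasure (density P (\<lambda>y. ennreal (a * indicator W y + b * indicator L y))) A
      = ennreal (a * measure P (W \<inter> A) + b * measure P (L \<inter> A))"
    using emeasure_density_two_step[OF W L _ ab] ab by (simp add: P.emeasure_eq_measure ennreal_mult'')
  also have "\<dots> = emeasure Q A"
  proof -
    have "A = {} \<or> A = W \<or> A = L \<or> A = space P" using A by (auto simp: L_def)
    moreover have "measure Q W + measure Q L = 1" using QL by simp
    ultimately show ?thesis
      using aW bL disj sub Q.emeasure_eq_measure[of A] Q.prob_space
      by (auto simp: Int_absorb1 Int_absorb2 space_Q)
  qed
  finally show ?thesis by (simp add: L_def)
qed

section \<open>The ambiguity set and worst-case expectations\<close>

locale transfer_setting =
  fixes lo hi :: real and D :: "real measure \<Rightarrow> real measure \<Rightarrow> ennreal"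
    and P :: "real measure" and \<eta> :: real and x :: "nat \<Rightarrow> real \<Rightarrow> real \<Rightarrow> real"
  assumes lo_pos: "0 < lo" and lo_less_hi: "lo < hi"
    and divergence: "assumption_D lo hi D"
    and P_Delta: "P \<in> Delta lo hi (BTheta lo hi)" and P_atomless: "atomless P"
    and eta_pos: "0 < \<eta>"
    and allocation: "allocation_rule lo hi x"
    and assm_X: "assumption_X lo hi D P \<eta> x"
begin

abbreviation "B \<equiv> restrict_space borel {lo..hi}"
abbreviation "amb \<equiv> ambiguity_set lo hi D P \<eta>"
abbreviation "worst_case \<equiv> worst lo hi D P \<eta>"

lemma space_B: "space B = {lo..hi}"
  by (simp add: space_restrict_space)

lemma BTheta_eq: "BTheta lo hi = sets B"
  by (simp add: BTheta_def Theta_def)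

lemma sets_P: "sets P = sets B" and space_P: "space P = {lo..hi}" and prob_space_P: "prob_space P"
  using P_Delta by (auto simp: Delta_def BTheta_eq Theta_def)

lemma measurable_P_iff: "f \<in> borel_measurable P \<longleftrightarrow> f \<in> borel_measurable B"
  using measurable_cong_sets[OF sets_P refl, of borel] by blast

lemma mem_Delta_iff:
  "Q \<in> Delta lo hi (BTheta lo hi) \<longleftrightarrow> prob_space Q \<and> space Q = {lo..hi} \<and> sets Q = sets B"
  by (auto simp: Delta_def BTheta_eq Theta_def)

lemma mem_amb_iff:
  "Q \<in> amb \<longleftrightarrow> prob_space Q \<and> space Q = {lo..hi} \<and> sets Q = sets B \<and> D Q P \<le> ennreal \<eta>"
  by (auto simp: ambiguity_set_def mem_Delta_iff)

lemma sub_sigma_BTheta: "sub_sigma lo hi (BTheta lo hi)"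
  unfolding sub_sigma_def BTheta_eq Theta_def
  using sets.sigma_algebra_axioms[of B] space_B by simp

lemma D_self: "D P P = 0"
  and D_mix_continuous: "\<lbrakk>Q \<in> Delta lo hi (BTheta lo hi);
      \<exists>f C. f \<in> borel_measurable P \<and> (\<forall>\<theta>\<in>space P. f \<theta> \<le> ennreal C) \<and> Q = density P f\<rbrakk>
    \<Longrightarrow> continuous_on {0..1} (\<lambda>e. D (mix e Q P) P)"
  and D_finite_ac: "\<lbrakk>Q \<in> Delta lo hi (BTheta lo hi); D Q P < top\<rbrakk> \<Longrightarrow> absolutely_continuous P Q"
  and D_restr_le: "\<lbrakk>Q \<in> Delta lo hi (BTheta lo hi); sub_sigma lo hi E; E \<subseteq> sets B\<rbrakk>
    \<Longrightarrow> D (restr Q E) (restr P E) \<le> D Q P"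
  and D_restr_eq: "\<lbrakk>Q \<in> Delta lo hi (BTheta lo hi); sub_sigma lo hi E; E \<subseteq> sets B;
      absolutely_continuous P Q; AE \<theta> in P. RN_deriv (restr P E) (restr Q E) \<theta> = RN_deriv P Q \<theta>\<rbrakk>
    \<Longrightarrow> D (restr Q E) (restr P E) = D Q P"
  using divergence sub_sigma_BTheta P_Delta unfolding assumption_D_def BTheta_eq by blast+

lemma P_mem_amb: "P \<in> amb"
  using D_self P_Delta by (simp add: ambiguity_set_def)

lemma amb_absolutely_continuous: "Q \<in> amb \<Longrightarrow> absolutely_continuous P Q"
  by (rule D_finite_ac) (auto simp: ambiguity_set_def le_less_trans[OF _ ennreal_less_top])

lemma emeasure_P_singleton: "emeasure P {t} = 0"
proof (rule ccontr)
  assume "emeasure P {t} \<noteq> 0"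
  then obtain A where "A \<in> sets P" "A \<subseteq> {t}" "0 < emeasure P A" "emeasure P A < emeasure P {t}"
    using P_atomless emeasure_neq_0_sets unfolding atomless_def by (metis not_gr_zero)
  moreover from \<open>A \<subseteq> {t}\<close> have "A = {} \<or> A = {t}" by blast
  ultimately show False by auto
qed

lemma AE_amb_neq: "Q \<in> amb \<Longrightarrow> t \<in> {lo..hi} \<Longrightarrow> AE y in Q. y \<noteq> t"
  using absolutely_continuousD[OF amb_absolutely_continuous, of Q "{t}"] emeasure_P_singleton[of t]
  by (intro AE_I'[of "{t}"]) (auto simp: sets_P sets_restrict_space_iff space_B mem_amb_iff)

lemma x_bounds: assumes "i \<in> {1,2}" "t \<in> {lo..hi}" "s \<in> {lo..hi}"
  shows "0 \<le> x i t s" "x i t s \<le> 1"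
proof -
  have "\<forall>\<theta>\<in>{lo..hi}. \<forall>\<theta>'\<in>{lo..hi}. x 1 \<theta> \<theta>' \<ge> 0 \<and> x 2 \<theta>' \<theta> \<ge> 0 \<and> x 1 \<theta> \<theta>' + x 2 \<theta>' \<theta> \<le> 1"
    using allocation by (simp add: allocation_rule_def Theta_def)
  then show "0 \<le> x i t s" "x i t s \<le> 1" using assms by fastforce+
qed

lemma x_zero_or_one: "i \<in> {1,2} \<Longrightarrow> t \<in> {lo..hi} \<Longrightarrow> y \<in> {lo..hi} \<Longrightarrow> y \<noteq> t
    \<Longrightarrow> x i t y = 0 \<or> x i t y = 1"
  using assm_X by (cases "i = 1") (auto simp: assumption_X_def Theta_def)

lemma Xbar_one_imp_hi: "i \<in> {1,2} \<Longrightarrow> t \<in> {lo..hi} \<Longrightarrow> Xbar P x i t = 1 \<Longrightarrow> t = hi"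
  using assm_X by (cases "i = 1") (auto simp: assumption_X_def Theta_def)

definition bounded_borel :: "(real \<Rightarrow> real) \<Rightarrow> bool" where
  "bounded_borel g \<longleftrightarrow> g \<in> borel_measurable B \<and> (\<exists>C. \<forall>y\<in>{lo..hi}. \<bar>g y\<bar> \<le> C)"

lemma bounded_borel_section:
  assumes "bounded_measurable_rule lo hi f" "i \<in> {1,2}" "t \<in> {lo..hi}"
  shows "bounded_borel (f i t)"
proof -
  have m: "(\<lambda>z. f i (fst z) (snd z)) \<in> borel_measurable (B \<Otimes>\<^sub>M B)"
    and C: "\<exists>C. \<forall>\<theta>\<in>{lo..hi}. \<forall>\<theta>'\<in>{lo..hi}. \<bar>f i \<theta> \<theta>'\<bar> \<le> C"
    using assms by (auto simp: bounded_measurable_rule_def Theta_def)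
  have "f i t \<in> borel_measurable B"
    using measurable_Pair2[OF m, of t] assms(3) space_B by simp
  then show ?thesis using C assms(3) unfolding bounded_borel_def by fastforce
qed

lemma bounded_borel_x: "i \<in> {1,2} \<Longrightarrow> t \<in> {lo..hi} \<Longrightarrow> bounded_borel (x i t)"
  using bounded_borel_section allocation by (auto simp: allocation_rule_def)

lemma bounded_borel_const: "bounded_borel (\<lambda>y. c)"
  unfolding bounded_borel_def by auto

lemma bounded_borel_indicator: "A \<in> sets B \<Longrightarrow> bounded_borel (indicator A)"
  unfolding bounded_borel_def by (auto intro!: exI[of _ 1] simp: indicator_def)

lemma bounded_borel_add: "bounded_borel f \<Longrightarrow> bounded_borel g \<Longrightarrow> bounded_borel (\<lambda>y. f y + g y)"
  unfolding bounded_borel_def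
  by (auto intro!: exI[where x="_ + _"] abs_triangle_ineq[THEN order_trans] add_mono)

lemma bounded_borel_diff: "bounded_borel f \<Longrightarrow> bounded_borel g \<Longrightarrow> bounded_borel (\<lambda>y. f y - g y)"
  unfolding bounded_borel_def
  by (auto intro!: exI[where x="_ + _"] abs_triangle_ineq4[THEN order_trans] add_mono)

lemma bounded_borel_mult: "bounded_borel f \<Longrightarrow> bounded_borel g \<Longrightarrow> bounded_borel (\<lambda>y. f y * g y)"
proof -
  assume f: "bounded_borel f" and g: "bounded_borel g"
  obtain C1 C2 where C: "\<forall>y\<in>{lo..hi}. \<bar>f y\<bar> \<le> C1" "\<forall>y\<in>{lo..hi}. \<bar>g y\<bar> \<le> C2"
    using f g by (auto simp: bounded_borel_def)
  have "\<bar>f y * g y\<bar> \<le> C1 * C2" if "y \<in> {lo..hi}" for y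
    unfolding abs_mult by (rule mult_mono) (use C that in auto)
  moreover have "(\<lambda>y. f y * g y) \<in> borel_measurable B"
    using f g unfolding bounded_borel_def by (auto intro: borel_measurable_times)
  ultimately show ?thesis unfolding bounded_borel_def by blast
qed

lemmas bounded_borel_intros = bounded_borel_const bounded_borel_indicator bounded_borel_add
  bounded_borel_diff bounded_borel_mult

lemma borel_measurable_amb: "Q \<in> amb \<Longrightarrow> bounded_borel g \<Longrightarrow> g \<in> borel_measurable Q"
  using measurable_cong_sets[of Q B] mem_amb_iff bounded_borel_def by auto

lemma abs_integral_amb_le:
  assumes Q: "Q \<in> amb" and g: "bounded_borel g" and C: "\<forall>y\<in>{lo..hi}. \<bar>g y\<bar> \<le> C"
  shows "integrable Q g" "\<bar>\<integral>y. g y \<partial>Q\<bar> \<le> C"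
proof -
  interpret prob_space Q using Q by (simp add: mem_amb_iff)
  have bound: "AE y in Q. \<bar>g y\<bar> \<le> C"
    using C Q by (intro AE_I2) (simp add: mem_amb_iff)
  show int: "integrable Q g"
    using borel_measurable_amb[OF Q g] bound by (intro integrable_const_bound) simp
  have "(\<integral>y. g y \<partial>Q) \<le> C" "- C \<le> (\<integral>y. g y \<partial>Q)"
    using bound by (auto intro!: integral_le_const integral_ge_const int)
  then show "\<bar>\<integral>y. g y \<partial>Q\<bar> \<le> C" by simp
qed

lemma integrable_amb: assumes "Q \<in> amb" "bounded_borel g" shows "integrable Q g"
proof -
  obtain C where "\<forall>y\<in>{lo..hi}. \<bar>g y\<bar> \<le> C" using assms(2) by (auto simp: bounded_borel_def)
  then show ?thesis by (rule abs_integral_amb_le(1)[OF assms])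
qed

lemma integral_amb_cong:
  assumes "Q \<in> amb" "\<And>y. y \<in> {lo..hi} \<Longrightarrow> g y = f y"
  shows "(\<integral>y. g y \<partial>Q) = (\<integral>y. f y \<partial>Q)"
  using assms mem_amb_iff by (intro Bochner_Integration.integral_cong) auto

lemma integral_amb_affine:
  assumes "Q \<in> amb" "bounded_borel g"
  shows "(\<integral>y. a + b * g y \<partial>Q) = a + b * (\<integral>y. g y \<partial>Q)"
proof -
  interpret prob_space Q using assms by (simp add: mem_amb_iff)
  show ?thesis using integrable_amb[OF assms] by (simp add: prob_space)
qed

lemma worst_case_le: assumes "Q \<in> amb" "bounded_borel g" shows "worst_case g \<le> (\<integral>y. g y \<partial>Q)"
proof -
  obtain C where "\<forall>y\<in>{lo..hi}. \<bar>g y\<bar> \<le> C" using assms(2) by (auto simp: bounded_borel_def)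
  then have "bdd_below ((\<lambda>Q. \<integral>y. g y \<partial>Q) ` amb)"
    using abs_integral_amb_le(2)[OF _ assms(2)] unfolding bdd_below_def abs_le_iff
    by (auto intro!: exI[of _ "- C"]) (metis minus_le_iff)
  then show ?thesis unfolding worst_def using assms(1) by (rule cINF_lower)
qed

lemma worst_case_greatest: "(\<And>Q. Q \<in> amb \<Longrightarrow> c \<le> (\<integral>y. g y \<partial>Q)) \<Longrightarrow> c \<le> worst_case g"
  unfolding worst_def using P_mem_amb by (intro cINF_greatest) auto

lemma worst_case_cong: "(\<And>y. y \<in> {lo..hi} \<Longrightarrow> g y = f y) \<Longrightarrow> worst_case g = worst_case f"
  unfolding worst_def by (intro INF_cong refl integral_amb_cong) auto

lemma worst_case_affine:
  assumes g: "bounded_borel g" and b: "0 \<le> b"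
  shows "worst_case (\<lambda>y. a + b * g y) = a + b * worst_case g"
proof (rule antisym)
  have ag: "bounded_borel (\<lambda>y. a + b * g y)" using g by (simp add: bounded_borel_intros)
  show "a + b * worst_case g \<le> worst_case (\<lambda>y. a + b * g y)"
  proof (rule worst_case_greatest)
    fix Q assume Q: "Q \<in> amb"
    have "b * worst_case g \<le> b * (\<integral>y. g y \<partial>Q)"
      using worst_case_le[OF Q g] b by (rule mult_left_mono)
    then show "a + b * worst_case g \<le> (\<integral>y. a + b * g y \<partial>Q)"
      using integral_amb_affine[OF Q g] by simp
  qed
  show "worst_case (\<lambda>y. a + b * g y) \<le> a + b * worst_case g"
  proof (cases "b = 0")
    case True
    then show ?thesis
      using worst_case_le[OF P_mem_amb ag] prob_space.prob_space[OF prob_space_P] by simp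
  next
    case False
    then have b_pos: "0 < b" using b by simp
    have "(worst_case (\<lambda>y. a + b * g y) - a) / b \<le> worst_case g"
    proof (rule worst_case_greatest)
      fix Q assume Q: "Q \<in> amb"
      have "worst_case (\<lambda>y. a + b * g y) \<le> a + b * (\<integral>y. g y \<partial>Q)"
        using worst_case_le[OF Q ag] integral_amb_affine[OF Q g] by simp
      then show "(worst_case (\<lambda>y. a + b * g y) - a) / b \<le> (\<integral>y. g y \<partial>Q)"
        using b_pos by (simp add: divide_le_eq mult.commute)
    qed
    then show ?thesis using b_pos by (simp add: divide_le_eq mult.commute)
  qed
qed

definition win_set :: "nat \<Rightarrow> real \<Rightarrow> real set" where
  "win_set i t = {y \<in> {lo..hi}. x i t y = 1}"

lemma win_set_subset: "win_set i t \<subseteq> {lo..hi}"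
  by (auto simp: win_set_def)

lemma sets_win_set: assumes "i \<in> {1,2}" "t \<in> {lo..hi}" shows "win_set i t \<in> sets B"
proof -
  have [measurable]: "x i t \<in> borel_measurable B"
    using bounded_borel_x[OF assms] by (simp add: bounded_borel_def)
  have "{y \<in> space B. x i t y = 1} \<in> sets B" by measurable
  then show ?thesis by (simp add: win_set_def space_B)
qed

text \<open>Assumption X only makes \<open>x i t\<close> 0-1 valued off the diagonal; the diagonal point is null
  because \<open>P\<close> is atomless.\<close>
lemma AE_x_eq_indicator_win_set:
  assumes "Q \<in> amb" "i \<in> {1,2}" "t \<in> {lo..hi}"
  shows "AE y in Q. x i t y = indicator (win_set i t) y"
  using AE_amb_neq[OF assms(1,3)] AE_space
proof eventually_elim
  case (elim y)
  then have "y \<in> {lo..hi}" using assms(1) by (simp add: mem_amb_iff)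
  then show ?case using x_zero_or_one[OF assms(2,3) _ elim(1)] by (auto simp: win_set_def)
qed

lemma integral_x_eq_measure_win_set:
  assumes "Q \<in> amb" "i \<in> {1,2}" "t \<in> {lo..hi}"
  shows "(\<integral>y. x i t y \<partial>Q) = measure Q (win_set i t)"
proof -
  have "(\<integral>y. x i t y \<partial>Q) = (\<integral>y. indicator (win_set i t) y \<partial>Q)"
    by (rule integral_cong_AE[OF borel_measurable_amb[OF assms(1) bounded_borel_x[OF assms(2,3)]]
          borel_measurable_amb[OF assms(1) bounded_borel_indicator[OF sets_win_set[OF assms(2,3)]]]
          AE_x_eq_indicator_win_set[OF assms]])
  also have "\<dots> = measure Q (win_set i t)"
    using assms(1) win_set_subset[of i t] by (simp add: mem_amb_iff Int_absorb2)
  finally show ?thesis .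
qed

lemma Xbar_eq_measure_win_set:
  "i \<in> {1,2} \<Longrightarrow> t \<in> {lo..hi} \<Longrightarrow> Xbar P x i t = measure P (win_set i t)"
  using integral_x_eq_measure_win_set[OF P_mem_amb] by (simp add: Xbar_def)

abbreviation "Xm \<equiv> Xmin lo hi D P \<eta> x"
abbreviation "Ustar i t \<equiv> integral {lo..t} (Xm i)"

lemma Xm_eq_worst_case: "Xm i t = worst_case (x i t)"
  by (simp add: Xmin_def)

lemma Xm_bounds: assumes "i \<in> {1,2}" "t \<in> {lo..hi}"
  shows "0 \<le> Xm i t" "Xm i t \<le> Xbar P x i t" "Xm i t \<le> 1"
proof -
  show "0 \<le> Xm i t" unfolding Xm_eq_worst_case
  proof (rule worst_case_greatest)
    fix Q assume "Q \<in> amb"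
    then show "0 \<le> (\<integral>y. x i t y \<partial>Q)"
      using x_bounds[OF assms] by (intro Bochner_Integration.integral_nonneg) (auto simp: mem_amb_iff)
  qed
  show le_Xbar: "Xm i t \<le> Xbar P x i t"
    unfolding Xm_eq_worst_case Xbar_def by (rule worst_case_le[OF P_mem_amb bounded_borel_x[OF assms]])
  have "Xbar P x i t \<le> 1"
    using Xbar_eq_measure_win_set[OF assms] prob_space.prob_le_1[OF prob_space_P] by simp
  then show "Xm i t \<le> 1" using le_Xbar by simp
qed

lemma mono_Xm: "i \<in> {1,2} \<Longrightarrow> mono_on {lo..hi} (Xm i)"
  using assm_X by (cases "i = 1") (auto simp: assumption_X_def Theta_def)

lemma borel_measurable_Xm[measurable]: "i \<in> {1,2} \<Longrightarrow> Xm i \<in> borel_measurable B"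
  using mono_Xm borel_measurable_mono_on_fnc by blast

lemma integrable_Xm: "i \<in> {1,2} \<Longrightarrow> lo \<le> a \<Longrightarrow> b \<le> hi \<Longrightarrow> Xm i integrable_on {a..b}"
  using integrable_on_mono_on mono_on_subset[OF mono_Xm] by auto

lemma Ustar_bounds: assumes "i \<in> {1,2}" "t \<in> {lo..hi}" shows "0 \<le> Ustar i t" "Ustar i t \<le> t - lo"
proof -
  show "0 \<le> Ustar i t"
    by (rule integral_nonneg) (use integrable_Xm[OF assms(1)] Xm_bounds[OF assms(1)] assms in auto)
  have "Ustar i t \<le> integral {lo..t} (\<lambda>_. 1::real)"
    by (rule integral_le) (use integrable_Xm[OF assms(1)] Xm_bounds[OF assms(1)] assms in auto)
  then show "Ustar i t \<le> t - lo" using assms by simp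
qed

lemma borel_measurable_Ustar[measurable]: "i \<in> {1,2} \<Longrightarrow> Ustar i \<in> borel_measurable B"
proof -
  assume i: "i \<in> {1,2}"
  have "mono_on {lo..hi} (Ustar i)"
    by (intro mono_onI integral_subset_le) (use integrable_Xm[OF i] Xm_bounds[OF i] in auto)
  then show ?thesis using borel_measurable_mono_on_fnc by blast
qed

lemma Ustar_tangent: assumes i: "i \<in> {1,2}" and r: "r \<in> {lo..hi}" and s: "s \<in> {lo..hi}"
  shows "(s - r) * Xm i r \<le> Ustar i s - Ustar i r"
proof (cases "r \<le> s")
  case True
  have "Ustar i r + integral {r..s} (Xm i) = Ustar i s"
    by (rule Henstock_Kurzweil_Integration.integral_combine) (use True r s integrable_Xm[OF i] in auto)
  moreover have "integral {r..s} (\<lambda>_. Xm i r) \<le> integral {r..s} (Xm i)"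
    by (rule integral_le) (use integrable_Xm[OF i] r s mono_onD[OF mono_Xm[OF i]] in auto)
  ultimately show ?thesis using True by simp
next
  case False
  have "Ustar i s + integral {s..r} (Xm i) = Ustar i r"
    by (rule Henstock_Kurzweil_Integration.integral_combine) (use False r s integrable_Xm[OF i] in auto)
  moreover have "integral {s..r} (Xm i) \<le> integral {s..r} (\<lambda>_. Xm i r)"
    by (rule integral_le) (use integrable_Xm[OF i] r s mono_onD[OF mono_Xm[OF i]] in auto)
  ultimately show ?thesis using False by (simp add: algebra_simps)
qed

abbreviation "ts \<equiv> tstar lo hi D P \<eta> x"
abbreviation "tw \<equiv> tstar_w lo hi D P \<eta> x"

lemma tw_eq: "tw i t = t * Xm i t - Ustar i t"
  by (simp add: tstar_w_def)

lemma tstar_eq: "ts i t s = tw i t"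
  unfolding tstar_def tstar_l_def tstar_w_def by (simp add: algebra_simps)

lemma abs_tw_le: assumes "i \<in> {1,2}" "t \<in> {lo..hi}" shows "\<bar>tw i t\<bar> \<le> 2 * hi"
proof -
  have "0 \<le> t * Xm i t" using Xm_bounds[OF assms] assms lo_pos by simp
  moreover have "t * Xm i t \<le> hi * 1"
    by (rule mult_mono) (use Xm_bounds[OF assms] assms lo_pos in auto)
  ultimately show ?thesis using Ustar_bounds[OF assms] assms lo_pos unfolding tw_eq abs_le_iff by auto
qed

lemma transfer_rule_tstar: "transfer_rule lo hi ts"
  unfolding transfer_rule_def bounded_measurable_rule_def tstar_eq Theta_def
proof (intro ballI conjI)
  fix i :: nat assume i: "i \<in> {1,2}"
  have [measurable]: "(\<lambda>t. t) \<in> borel_measurable B" by (simp add: measurable_restrict_space1)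
  have "tw i \<in> borel_measurable B" unfolding tstar_w_def using i by measurable
  then show "(\<lambda>z. tw i (fst z)) \<in> borel_measurable (B \<Otimes>\<^sub>M B)" by measurable
  show "\<exists>C. \<forall>\<theta>\<in>{lo..hi}. \<forall>\<theta>'\<in>{lo..hi}. \<bar>tw i \<theta>\<bar> \<le> C"
    using abs_tw_le[OF i] by blast
qed

lemma Tbar_tstar: "Tbar P ts i t = tw i t"
  unfolding Tbar_def tstar_eq using prob_space.prob_space[OF prob_space_P] by simp

lemma Umin_tstar: assumes "i \<in> {1,2}" "t \<in> {lo..hi}"
  shows "Umin lo hi D P \<eta> x ts i t = Ustar i t"
proof -
  have "Umin lo hi D P \<eta> x ts i t = worst_case (\<lambda>y. - tw i t + t * x i t y)"
    unfolding Umin_def tstar_eq by (simp add: algebra_simps)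
  also have "\<dots> = - tw i t + t * Xm i t"
    using worst_case_affine[OF bounded_borel_x[OF assms], of t "- tw i t"] assms lo_pos
    by (simp add: Xm_eq_worst_case)
  finally show ?thesis by (simp add: tw_eq)
qed

lemma winner_favored_tstar: "winner_favored lo hi x ts"
  by (simp add: winner_favored_def tstar_eq)

lemma admissible_R_tstar: "admissible_R lo hi D P \<eta> x ts"
  unfolding admissible_R_def
proof (intro conjI transfer_rule_tstar winner_favored_tstar ballI)
  show "win_lose_dependent lo hi x ts"
    unfolding win_lose_dependent_def
    by (rule exI[of _ tw], rule exI[of _ "tstar_l lo hi D P \<eta> x"])
       (use lo_pos in \<open>auto simp: tstar_def tstar_l_def tstar_w_def Theta_def\<close>)
  show "Umin lo hi D P \<eta> x ts i \<theta> = Ustar i \<theta>" if "i \<in> {1,2}" "\<theta> \<in> Theta lo hi" for i \<theta>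
    using Umin_tstar that by (simp add: Theta_def)
qed

lemma admissible_P_tstar: "admissible_P lo hi D P \<eta> x ts"
  unfolding admissible_P_def feasible_def
proof (intro conjI transfer_rule_tstar winner_favored_tstar)
  show "individually_rational lo hi D P \<eta> x ts"
    unfolding individually_rational_def Theta_def using Umin_tstar Ustar_bounds by auto
  show "incentive_compatible lo hi D P \<eta> x ts"
    unfolding incentive_compatible_def Theta_def
  proof (intro ballI)
    fix i :: nat and \<theta> \<theta>h assume i: "i \<in> {1,2}" and th: "\<theta> \<in> {lo..hi}" "\<theta>h \<in> {lo..hi}"
    have "worst_case (\<lambda>y. \<theta> * x i \<theta>h y - ts i \<theta>h y) = worst_case (\<lambda>y. - tw i \<theta>h + \<theta> * x i \<theta>h y)"
      by (simp add: tstar_eq algebra_simps)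
    also have "\<dots> = - tw i \<theta>h + \<theta> * Xm i \<theta>h"
      using worst_case_affine[OF bounded_borel_x[OF i th(2)], of \<theta> "- tw i \<theta>h"] th lo_pos
      by (simp add: Xm_eq_worst_case)
    also have "\<dots> \<le> Ustar i \<theta>"
      using Ustar_tangent[OF i th(2) th(1)] by (simp add: tw_eq algebra_simps)
    also have "\<dots> = worst_case (\<lambda>y. \<theta> * x i \<theta> y - ts i \<theta> y)"
      using Umin_tstar[OF i th(1)] by (simp add: Umin_def)
    finally show "worst_case (\<lambda>y. \<theta> * x i \<theta>h y - ts i \<theta>h y) \<le> worst_case (\<lambda>y. \<theta> * x i \<theta> y - ts i \<theta> y)" .
  qed
qed

lemma
  assumes "i \<in> {1,2}" "t \<in> {lo..hi}"
    and tt: "\<And>s. s \<in> {lo..hi} \<Longrightarrow> tt i t s = a * x i t s + b * (1 - x i t s)" and "- b \<le> t - a"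
  shows Umin_win_lose: "Umin lo hi D P \<eta> x tt i t = - b + (t - a + b) * Xm i t"
    and Tbar_win_lose: "Tbar P tt i t = b + (a - b) * Xbar P x i t"
proof -
  have "Umin lo hi D P \<eta> x tt i t = worst_case (\<lambda>y. - b + (t - a + b) * x i t y)"
    unfolding Umin_def by (rule worst_case_cong) (simp add: tt algebra_simps)
  also have "\<dots> = - b + (t - a + b) * Xm i t"
    using worst_case_affine[OF bounded_borel_x[OF assms(1,2)], of "t - a + b" "- b"] assms(4)
    by (simp add: Xm_eq_worst_case)
  finally show "Umin lo hi D P \<eta> x tt i t = - b + (t - a + b) * Xm i t" .
  have "Tbar P tt i t = (\<integral>y. b + (a - b) * x i t y \<partial>P)"
    unfolding Tbar_def by (rule integral_amb_cong[OF P_mem_amb]) (simp add: tt algebra_simps)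
  also have "\<dots> = b + (a - b) * Xbar P x i t"
    using integral_amb_affine[OF P_mem_amb bounded_borel_x[OF assms(1,2)]] by (simp add: Xbar_def)
  finally show "Tbar P tt i t = b + (a - b) * Xbar P x i t" .
qed

lemma borel_measurable_rule_pair:
  assumes "bounded_measurable_rule lo hi tt" "i \<in> {1,2}"
  shows "(\<lambda>z. tt i (fst z) (snd z)) \<in> borel_measurable (P \<Otimes>\<^sub>M P)"
proof -
  have "sets (P \<Otimes>\<^sub>M P) = sets (B \<Otimes>\<^sub>M B)" by (intro sets_pair_measure_cong sets_P)
  then have "borel_measurable (P \<Otimes>\<^sub>M P) = borel_measurable (B \<Otimes>\<^sub>M B)"
    by (intro measurable_cong_sets) auto
  then show ?thesis using assms by (auto simp: bounded_measurable_rule_def Theta_def)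
qed

lemma integrable_Tbar: assumes tt: "transfer_rule lo hi tt" and i: "i \<in> {1,2}"
  shows "integrable P (Tbar P tt i)"
proof -
  interpret P: prob_space P by (rule prob_space_P)
  have "case_prod (tt i) \<in> borel_measurable (P \<Otimes>\<^sub>M P)"
    using borel_measurable_rule_pair[OF tt[unfolded transfer_rule_def] i] by (simp add: case_prod_beta')
  then have meas: "Tbar P tt i \<in> borel_measurable P"
    unfolding Tbar_def using P.borel_measurable_lebesgue_integral by simp
  obtain C where C: "\<forall>\<theta>\<in>{lo..hi}. \<forall>\<theta>'\<in>{lo..hi}. \<bar>tt i \<theta> \<theta>'\<bar> \<le> C"
    using tt i by (auto simp: transfer_rule_def bounded_measurable_rule_def Theta_def)
  have "\<bar>Tbar P tt i t\<bar> \<le> C" if "t \<in> {lo..hi}" for t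
    unfolding Tbar_def using C that bounded_borel_section[OF tt[unfolded transfer_rule_def] i that]
    by (intro abs_integral_amb_le(2)[OF P_mem_amb]) auto
  then show ?thesis
    using meas by (intro P.integrable_const_bound[where B=C]) (auto simp: space_P)
qed

section \<open>Revenue bound for winner-favored transfers\<close>

lemma Ustar_le_Umin_of_feasible:
  assumes i: "i \<in> {1,2}" and tt: "transfer_rule lo hi tt" and fe: "feasible lo hi D P \<eta> x tt"
    and t: "t \<in> {lo..hi}"
  shows "Ustar i t \<le> Umin lo hi D P \<eta> x tt i t"
proof -
  define U where "U = Umin lo hi D P \<eta> x tt i"
  have IC: "worst_case (\<lambda>y. s * x i r y - tt i r y) \<le> U s"
    if "s \<in> {lo..hi}" "r \<in> {lo..hi}" for s r
    using fe i that unfolding feasible_def incentive_compatible_def U_def Umin_def Theta_def by blast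
  have IR: "0 \<le> U lo"
    using fe i lo_less_hi unfolding feasible_def individually_rational_def U_def Theta_def by auto
  have "Ustar i t \<le> U t - U lo"
  proof (rule integral_le_diff_of_increments)
    show "lo \<le> t" "mono_on {lo..t} (Xm i)" using t mono_on_subset[OF mono_Xm[OF i]] by auto
    fix r s assume rs: "lo \<le> r" "r \<le> s" "s \<le> t"
    then have r: "r \<in> {lo..hi}" and s: "s \<in> {lo..hi}" using t by auto
    have x: "bounded_borel (x i r)" by (rule bounded_borel_x[OF i r])
    have g: "bounded_borel (\<lambda>y. r * x i r y - tt i r y)"
      using bounded_borel_section[OF tt[unfolded transfer_rule_def] i r] x
      by (simp add: bounded_borel_intros)
    have "U r + (s - r) * Xm i r \<le> worst_case (\<lambda>y. s * x i r y - tt i r y)"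
    proof (rule worst_case_greatest)
      fix Q assume Q: "Q \<in> amb"
      have "(\<integral>y. s * x i r y - tt i r y \<partial>Q)
          = (\<integral>y. (r * x i r y - tt i r y) + (s - r) * x i r y \<partial>Q)"
        by (rule integral_amb_cong[OF Q]) (simp add: algebra_simps)
      also have "\<dots> = (\<integral>y. r * x i r y - tt i r y \<partial>Q) + (s - r) * (\<integral>y. x i r y \<partial>Q)"
        using integrable_amb[OF Q g] integrable_amb[OF Q x] by simp
      finally show "U r + (s - r) * Xm i r \<le> (\<integral>y. s * x i r y - tt i r y \<partial>Q)"
        using worst_case_le[OF Q g] worst_case_le[OF Q x] rs
        by (simp add: U_def Umin_def Xm_eq_worst_case add_mono mult_left_mono)
    qed
    then show "(s - r) * Xm i r \<le> U s - U r" using IC[OF s r] by simp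
  qed
  then show ?thesis using IR by (simp add: U_def)
qed

text \<open>Replacing \<open>Q\<close> by the measure with the same mass on \<open>W\<close> and on its complement, spread
  proportionally to \<open>P\<close>, does not increase the divergence: by (D5) the coarsening has the same
  divergence as its restriction to the four-set algebra generated by \<open>W\<close>, on which it agrees with
  \<open>Q\<close>, and (D4) bounds that restriction by \<open>D Q P\<close>.\<close>
lemma coarsening_mem_amb:
  assumes W: "W \<in> sets B" and pW: "0 < measure P W" "measure P W < 1" and Q: "Q \<in> amb"
  defines "a \<equiv> measure Q W / measure P W" and "b \<equiv> (1 - measure Q W) / (1 - measure P W)"
  shows "density P (\<lambda>y. ennreal (a * indicator W y + b * indicator ({lo..hi} - W) y)) \<in> amb"
proof -
  interpret P: prob_space P by (rule prob_space_P)
  define Q' where "Q' = density P (\<lambda>y. ennreal (a * indicator W y + b * indicator ({lo..hi} - W) y))"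
  define E where "E = {{}, W, {lo..hi} - W, {lo..hi}}"
  have WP: "W \<in> sets P" using W sets_P by simp
  have space_Q: "space Q = {lo..hi}" and Q_prob: "prob_space Q" and sets_Q: "sets Q = sets P"
    using Q sets_P by (auto simp: mem_amb_iff)
  have ab: "0 \<le> a" "0 \<le> b" using pW prob_space.prob_le_1[OF Q_prob] by (auto simp: a_def b_def)
  have agree: "emeasure Q' A = emeasure Q A" if "A \<in> E" for A
    using emeasure_coarsening[OF prob_space_P Q_prob sets_Q WP pW, of A] that
    by (simp add: Q'_def E_def a_def b_def space_P)
  then have "emeasure Q' {lo..hi} = 1"
    using prob_space.emeasure_space_1[OF Q_prob] by (simp add: E_def space_Q)
  then have Q'_Delta: "Q' \<in> Delta lo hi (BTheta lo hi)"
    by (auto simp: mem_Delta_iff Q'_def space_P sets_P intro!: prob_spaceI)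
  have W_sub: "W \<subseteq> {lo..hi}" using sets.sets_into_space[OF W] by (simp add: space_B)
  have E: "sigma_algebra {lo..hi} E" "E \<subseteq> sets B"
    using sigma_algebra_single_set[OF W_sub] W sets.top[of B] by (auto simp: E_def space_B)
  then have sub_E: "sub_sigma lo hi E" by (simp add: sub_sigma_def Theta_def BTheta_eq)
  have "measure_of {lo..hi} E (emeasure Q') = measure_of {lo..hi} E (emeasure Q)"
    using agree sigma_algebra.sigma_sets_eq[OF E(1)] W_sub
    by (intro measure_of_eq) (auto simp: E_def)
  then have "D (restr Q E) (restr P E) = D (restr Q' E) (restr P E)"
    by (simp add: restr_def Q'_def space_P space_Q)
  also have "\<dots> = D Q' P"
  proof (rule D_restr_eq[OF Q'_Delta sub_E E(2)])
    have "{lo..hi} - W \<in> sets P" using WP sets.top[of P] by (auto simp: space_P)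
    then have "(\<lambda>y. ennreal (a * indicator W y + b * indicator ({lo..hi} - W) y)) \<in> borel_measurable P"
      using WP by measurable
    then show "absolutely_continuous P Q'"
      unfolding Q'_def by (rule absolutely_continuousI_density)
    show "AE y in P. RN_deriv (restr P E) (restr Q' E) y = RN_deriv P Q' y"
      using RN_deriv_restr_two_step[OF P.finite_measure_axioms WP ab] by (simp add: Q'_def E_def space_P)
  qed
  finally have "D Q' P \<le> D Q P"
    using D_restr_le[OF _ sub_E E(2), of Q] Q by (simp add: ambiguity_set_def)
  also have "D Q P \<le> ennreal \<eta>" using Q by (simp add: ambiguity_set_def)
  finally show ?thesis using Q'_Delta by (simp add: ambiguity_set_def Q'_def)
qed

lemma winner_favored_threshold:
  assumes i: "i \<in> {1,2}" and t: "t \<in> {lo..hi}" "t < hi"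
    and tt: "transfer_rule lo hi tt" and wf: "winner_favored lo hi x tt"
  obtains c where "\<And>y. y \<in> win_set i t \<Longrightarrow> tt i t y \<le> c"
    and "\<And>y. y \<in> {lo..hi} - win_set i t - {t} \<Longrightarrow> c \<le> tt i t y"
proof (rule separating_value)
  obtain C where C: "\<forall>y\<in>{lo..hi}. \<bar>tt i t y\<bar> \<le> C"
    using bounded_borel_section[OF tt[unfolded transfer_rule_def] i t(1)]
    by (auto simp: bounded_borel_def)
  show "bdd_above (tt i t ` win_set i t)"
    using C win_set_subset by (auto simp: bdd_above_def abs_le_iff intro!: exI[of _ C])
  show "bdd_below (tt i t ` ({lo..hi} - win_set i t - {t}))"
    using C by (auto simp: bdd_below_def abs_le_iff intro!: exI[of _ "- C"])
  fix v w assume "v \<in> tt i t ` win_set i t" "w \<in> tt i t ` ({lo..hi} - win_set i t - {t})"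
  then obtain yw yl where "v = tt i t yw" "yw \<in> win_set i t"
    and "w = tt i t yl" "yl \<in> {lo..hi}" "yl \<notin> win_set i t" "yl \<noteq> t" by blast
  moreover from this have "x i t yw = 1" "x i t yl = 0"
    using x_zero_or_one[OF i t(1)] by (auto simp: win_set_def)
  ultimately show "v \<le> w"
    using wf i t by (auto simp: winner_favored_def Theta_def win_set_def)
qed (metis image_eqI)

lemma coarsened_payoff_le:
  assumes W: "W \<in> sets B" and p: "0 < measure P W" "measure P W < 1"
    and q: "0 \<le> q" "q \<le> measure P W" and s: "bounded_borel s"
    and sep: "AE y in P. (y \<in> W \<longrightarrow> s y \<le> c) \<and> (y \<notin> W \<longrightarrow> c \<le> s y)"
  defines "a \<equiv> q / measure P W" and "b \<equiv> (1 - q) / (1 - measure P W)"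
  shows "(\<integral>y. (a * indicator W y + b * indicator ({lo..hi} - W) y) * (t * indicator W y - s y) + s y \<partial>P)
    \<le> t * q"
proof -
  interpret P: prob_space P by (rule prob_space_P)
  define r where "r y = (c - c * b) + (t * a - c * a + c * b) * indicator W y" for y
  have ab: "a \<le> 1" "1 \<le> b" using p q by (auto simp: a_def b_def)
  have WL: "{lo..hi} - W \<in> sets B" using W sets.top[of B] by (auto simp: space_B)
  have "(\<integral>y. (a * indicator W y + b * indicator ({lo..hi} - W) y) * (t * indicator W y - s y) + s y \<partial>P)
      \<le> (\<integral>y. r y \<partial>P)"
  proof (rule integral_mono_AE)
    show "integrable P (\<lambda>y. (a * indicator W y + b * indicator ({lo..hi} - W) y) * (t * indicator W y - s y) + s y)"
      "integrable P r"
      unfolding r_def using W WL s by (auto intro!: integrable_amb[OF P_mem_amb] bounded_borel_intros)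
    show "AE y in P. (a * indicator W y + b * indicator ({lo..hi} - W) y) * (t * indicator W y - s y) + s y \<le> r y"
      using sep AE_space
    proof eventually_elim
      case (elim y)
      show ?case
      proof (cases "y \<in> W")
        case True
        then have "(1 - a) * s y \<le> (1 - a) * c" using elim ab by (intro mult_left_mono) auto
        then show ?thesis using True by (simp add: r_def algebra_simps)
      next
        case False
        then have "(1 - b) * s y \<le> (1 - b) * c" using elim ab by (intro mult_left_mono_neg) auto
        then show ?thesis using False elim(2) by (simp add: r_def space_P algebra_simps)
      qed
    qed
  qed
  also have "(\<integral>y. r y \<partial>P) = (c - c * b) + (t * a - c * a + c * b) * measure P W"
    unfolding r_def using integral_amb_affine[OF P_mem_amb bounded_borel_indicator[OF W]] W
    by (simp add: sets_P)
  also have "\<dots> = t * (a * measure P W) + c * (1 - (a * measure P W + b * (1 - measure P W)))"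
    by (simp add: algebra_simps)
  also have "\<dots> = t * q"
    using p by (simp add: a_def b_def)
  finally show ?thesis .
qed

text \<open>If \<open>Q\<close> puts less mass than \<open>P\<close> on the winning set, compare with its coarsening \<open>Q'\<close>:
  on the winning set the payments lie below the threshold \<open>c\<close> and on the losing set above it,
  and \<open>Q'\<close> moves mass from the former to the latter.\<close>
lemma worst_payoff_le_of_less_win_mass:
  assumes i: "i \<in> {1,2}" and t: "t \<in> {lo..hi}" "t < hi"
    and tt: "transfer_rule lo hi tt" and wf: "winner_favored lo hi x tt"
    and Q: "Q \<in> amb" and less: "measure Q (win_set i t) < measure P (win_set i t)"
  shows "worst_case (\<lambda>y. t * x i t y - tt i t y) + Tbar P tt i t \<le> t * measure Q (win_set i t)"
proof -
  define W where "W = win_set i t"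
  define g where "g = (\<lambda>y. t * x i t y - tt i t y)"
  have W: "W \<in> sets B" unfolding W_def by (rule sets_win_set[OF i t(1)])
  have s: "bounded_borel (tt i t)"
    by (rule bounded_borel_section[OF tt[unfolded transfer_rule_def] i t(1)])
  have g: "bounded_borel g" unfolding g_def using s bounded_borel_x[OF i t(1)] by (simp add: bounded_borel_intros)
  have "measure P W \<noteq> 1" using Xbar_one_imp_hi[OF i t(1)] Xbar_eq_measure_win_set[OF i t(1)] t(2)
    by (auto simp: W_def)
  moreover have "0 \<le> measure Q W" "measure P W \<le> 1" "measure Q W \<le> 1"
    using prob_space.prob_le_1[OF prob_space_P] Q prob_space.prob_le_1 by (auto simp: mem_amb_iff)
  ultimately have p: "0 < measure P W" "measure P W < 1" using less unfolding W_def by linarith+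
  obtain c where c: "\<And>y. y \<in> W \<Longrightarrow> tt i t y \<le> c" "\<And>y. y \<in> {lo..hi} - W - {t} \<Longrightarrow> c \<le> tt i t y"
    using winner_favored_threshold[OF i t tt wf] unfolding W_def by blast
  define a where "a = measure Q W / measure P W"
  define b where "b = (1 - measure Q W) / (1 - measure P W)"
  define h where "h = (\<lambda>y. a * indicator W y + b * indicator ({lo..hi} - W) y)"
  have "0 \<le> a" "0 \<le> b" using p \<open>0 \<le> measure Q W\<close> \<open>measure Q W \<le> 1\<close> by (simp_all add: a_def b_def)
  moreover have "{lo..hi} - W \<in> sets B" using W sets.top[of B] by (auto simp: space_B)
  ultimately have h: "bounded_borel h" "\<And>y. 0 \<le> h y"
    using W by (simp_all add: h_def bounded_borel_intros)
  have "density P (\<lambda>y. ennreal (h y)) \<in> amb"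
    using coarsening_mem_amb[OF W p Q] by (simp add: h_def a_def b_def)
  then have "worst_case g \<le> (\<integral>y. g y \<partial>density P (\<lambda>y. ennreal (h y)))"
    by (rule worst_case_le[OF _ g])
  also have "\<dots> = (\<integral>y. h y * g y \<partial>P)"
    using integral_density[of g P h] h g by (simp add: bounded_borel_def measurable_P_iff)
  also have "\<dots> = (\<integral>y. h y * (t * indicator W y - tt i t y) \<partial>P)"
    using AE_x_eq_indicator_win_set[OF P_mem_amb i t(1)] h g s W
    by (intro integral_cong_AE) (auto simp: g_def W_def bounded_borel_def measurable_P_iff)
  also have "\<dots> = (\<integral>y. h y * (t * indicator W y - tt i t y) + tt i t y \<partial>P) - Tbar P tt i t"
    using W h s by (simp add: Tbar_def integrable_amb[OF P_mem_amb] bounded_borel_intros)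
  also have "\<dots> \<le> t * measure Q W - Tbar P tt i t"
  proof -
    have "AE y in P. (y \<in> W \<longrightarrow> tt i t y \<le> c) \<and> (y \<notin> W \<longrightarrow> c \<le> tt i t y)"
      using AE_amb_neq[OF P_mem_amb t(1)] AE_space by eventually_elim (auto simp: c space_P)
    then show ?thesis
      using coarsened_payoff_le[OF W p, of "measure Q W" "tt i t" c t] less s
      by (simp add: h_def a_def b_def W_def)
  qed
  finally show ?thesis by (simp add: g_def W_def)
qed

lemma Umin_plus_Tbar_le:
  assumes i: "i \<in> {1,2}" and t: "t \<in> {lo..hi}" "t < hi"
    and tt: "transfer_rule lo hi tt" and wf: "winner_favored lo hi x tt"
  shows "Umin lo hi D P \<eta> x tt i t + Tbar P tt i t \<le> t * Xm i t"
proof -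
  define g where "g = (\<lambda>y. t * x i t y - tt i t y)"
  have t_pos: "0 < t" using t lo_pos by simp
  have "worst_case g + Tbar P tt i t \<le> t * measure Q (win_set i t)" if Q: "Q \<in> amb" for Q
  proof (cases "measure P (win_set i t) \<le> measure Q (win_set i t)")
    case True
    have x: "bounded_borel (x i t)" and s: "bounded_borel (tt i t)"
      using bounded_borel_x[OF i t(1)] bounded_borel_section[OF tt[unfolded transfer_rule_def] i t(1)] .
    then have "worst_case g + Tbar P tt i t \<le> t * measure P (win_set i t)"
      using worst_case_le[OF P_mem_amb, of g] integral_x_eq_measure_win_set[OF P_mem_amb i t(1)]
        integrable_amb[OF P_mem_amb] by (simp add: g_def Tbar_def bounded_borel_intros)
    also have "\<dots> \<le> t * measure Q (win_set i t)"
      using True t_pos by (intro mult_left_mono) auto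
    finally show ?thesis .
  next
    case False
    then show ?thesis using worst_payoff_le_of_less_win_mass[OF i t tt wf Q] by (simp add: g_def)
  qed
  then have "(worst_case g + Tbar P tt i t) / t \<le> Xm i t"
    unfolding Xm_eq_worst_case using t_pos
    by (intro worst_case_greatest) (simp add: integral_x_eq_measure_win_set[OF _ i t(1)] divide_le_eq mult.commute)
  then show ?thesis using t_pos by (simp add: Umin_def g_def divide_le_eq mult.commute)
qed

lemma AE_Tbar_le_tw:
  assumes i: "i \<in> {1,2}" and tt: "transfer_rule lo hi tt" and wf: "winner_favored lo hi x tt"
    and U: "\<And>\<theta>. \<theta> \<in> {lo..hi} \<Longrightarrow> Ustar i \<theta> \<le> Umin lo hi D P \<eta> x tt i \<theta>"
  shows "AE \<theta> in P. Tbar P tt i \<theta> \<le> tw i \<theta>"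
proof -
  have "AE \<theta> in P. \<theta> \<noteq> hi" using AE_amb_neq[OF P_mem_amb] lo_less_hi by simp
  with AE_space show ?thesis
  proof eventually_elim
    case (elim \<theta>)
    then have \<theta>: "\<theta> \<in> {lo..hi}" "\<theta> < hi" using space_P by auto
    then show ?case using Umin_plus_Tbar_le[OF i \<theta> tt wf] U[OF \<theta>(1)] by (simp add: tw_eq)
  qed
qed

lemma integral_Tbar_le_tstar:
  assumes i: "i \<in> {1,2}" and tt: "transfer_rule lo hi tt" and wf: "winner_favored lo hi x tt"
    and U: "\<And>\<theta>. \<theta> \<in> {lo..hi} \<Longrightarrow> Ustar i \<theta> \<le> Umin lo hi D P \<eta> x tt i \<theta>"
  shows "(\<integral>\<theta>. Tbar P tt i \<theta> \<partial>P) \<le> (\<integral>\<theta>. Tbar P ts i \<theta> \<partial>P)"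
proof (rule integral_mono_AE[OF integrable_Tbar[OF tt i] integrable_Tbar[OF transfer_rule_tstar i]])
  show "AE \<theta> in P. Tbar P tt i \<theta> \<le> Tbar P ts i \<theta>"
    using AE_Tbar_le_tw[OF i tt wf U] unfolding Tbar_tstar by blast
qed

lemma objective_le_tstar:
  assumes tt: "transfer_rule lo hi tt" and wf: "winner_favored lo hi x tt"
    and U: "\<And>i \<theta>. i \<in> {1,2} \<Longrightarrow> \<theta> \<in> {lo..hi} \<Longrightarrow> Ustar i \<theta> \<le> Umin lo hi D P \<eta> x tt i \<theta>"
  shows "objective P tt \<le> objective P ts"
  using integral_Tbar_le_tstar[OF _ tt wf U, of 1] integral_Tbar_le_tstar[OF _ tt wf U, of 2]
  by (simp add: objective_def)

lemma solves_R_tstar: "solves_R lo hi D P \<eta> x ts"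
  unfolding solves_R_def
proof (intro conjI admissible_R_tstar allI impI)
  fix tt assume "admissible_R lo hi D P \<eta> x tt"
  then show "objective P tt \<le> objective P ts"
    by (intro objective_le_tstar) (auto simp: admissible_R_def Theta_def)
qed

lemma solves_P_tstar: "solves_P lo hi D P \<eta> x ts"
  unfolding solves_P_def
proof (intro conjI admissible_P_tstar allI impI)
  fix tt assume "admissible_P lo hi D P \<eta> x tt"
  then show "objective P tt \<le> objective P ts"
    by (intro objective_le_tstar Ustar_le_Umin_of_feasible) (auto simp: admissible_P_def)
qed

section \<open>Uniqueness\<close>

lemma small_mixture_divergence:
  assumes Q0: "Q0 \<in> Delta lo hi (BTheta lo hi)" and f: "f \<in> borel_measurable P"
    and bound: "\<forall>y\<in>space P. f y \<le> ennreal C" and Q0_eq: "Q0 = density P f"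
  obtains e where "0 < e" "e \<le> 1" "D (mix e Q0 P) P < ennreal \<eta>"
proof -
  have "continuous_on {0..1} (\<lambda>e. D (mix e Q0 P) P)"
    using D_mix_continuous[OF Q0] f bound Q0_eq by blast
  then have "((\<lambda>e. D (mix e Q0 P) P) \<longlongrightarrow> D (mix 0 Q0 P) P) (at 0 within {0..1})"
    by (simp add: continuous_on_def)
  moreover have "mix 0 Q0 P = P"
    using mix_density[OF f, of 0] by (simp add: Q0_eq density_1)
  ultimately have "((\<lambda>e. D (mix e Q0 P) P) \<longlongrightarrow> 0) (at 0 within {0..1})"
    using D_self by simp
  then have "\<forall>\<^sub>F e in at 0 within {0..1}. D (mix e Q0 P) P < ennreal \<eta>"
    using eta_pos by (intro order_tendstoD(2)) auto
  then obtain d where d: "0 < d"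
    "\<And>e. e \<in> {0..1} \<Longrightarrow> e \<noteq> 0 \<Longrightarrow> dist e 0 < d \<Longrightarrow> D (mix e Q0 P) P < ennreal \<eta>"
    unfolding eventually_at by blast
  show ?thesis
    using that[of "min 1 (d / 2)"] d by (auto simp: dist_real_def)
qed

lemma mixture_mem_amb:
  assumes L: "L \<in> sets P" "0 < measure P L"
  obtains e where "0 < e" "e \<le> 1" "mix e (uniform_measure P L) P \<in> amb"
proof -
  interpret P: prob_space P by (rule prob_space_P)
  define f where "f = (\<lambda>y. indicator L y / emeasure P L)"
  have PL: "emeasure P L = ennreal (measure P L)" by (simp add: P.emeasure_eq_measure)
  have Q0: "uniform_measure P L \<in> Delta lo hi (BTheta lo hi)"
    using PL L by (auto simp: mem_Delta_iff space_P sets_P intro!: prob_space_uniform_measure)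
  have f: "f \<in> borel_measurable P" unfolding f_def using L by measurable
  have "1 / ennreal (measure P L) = ennreal (1 / measure P L)"
    using divide_ennreal[of 1 "measure P L"] L by simp
  then have "\<forall>y\<in>space P. f y \<le> ennreal (1 / measure P L)"
    by (auto simp: f_def PL split: split_indicator)
  moreover have Q0_eq: "uniform_measure P L = density P f"
    by (simp add: uniform_measure_def f_def)
  ultimately obtain e where e: "0 < e" "e \<le> 1" and De: "D (mix e (uniform_measure P L) P) P < ennreal \<eta>"
    using small_mixture_divergence[OF Q0 f] by blast
  have "emeasure (mix e (uniform_measure P L) P) (space P) = ennreal e + ennreal (1 - e)"
    using emeasure_mix_density[OF f sets.top] prob_space.emeasure_space_1[OF Q0[unfolded mem_Delta_iff, THEN conjunct1]]
    by (simp add: Q0_eq P.emeasure_space_1)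
  also have "\<dots> = 1" using e by (simp flip: ennreal_plus)
  finally have "prob_space (mix e (uniform_measure P L) P)"
    by (intro prob_spaceI) (simp add: Q0_eq mix_density[OF f])
  then have "mix e (uniform_measure P L) P \<in> amb"
    using De by (simp add: mem_amb_iff Q0_eq mix_density[OF f] space_P sets_P)
  with e that show ?thesis by blast
qed

text \<open>Moving a little mass from the winning to the losing set stays within the ambiguity set by
  (D2) and lowers the probability of winning.\<close>
lemma Xm_less_Xbar:
  assumes i: "i \<in> {1,2}" and t: "t \<in> {lo..hi}"
    and pW: "0 < measure P (win_set i t)" "measure P (win_set i t) < 1"
  shows "Xm i t < Xbar P x i t"
proof -
  interpret P: prob_space P by (rule prob_space_P)
  define W where "W = win_set i t"
  define L where "L = {lo..hi} - W"
  have W: "W \<in> sets P" using sets_win_set[OF i t] by (simp add: W_def sets_P)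
  have L: "L \<in> sets P" using W sets.top[of P] by (auto simp: L_def space_P)
  have "measure P L = 1 - measure P W"
    using P.prob_compl[OF W] by (simp add: L_def space_P)
  then obtain e where e: "0 < e" "e \<le> 1" and Qe: "mix e (uniform_measure P L) P \<in> amb"
    using mixture_mem_amb[OF L] pW by (auto simp: W_def)
  have LW: "L \<inter> W = {}" by (auto simp: L_def)
  have "(\<lambda>y. indicator L y / emeasure P L) \<in> borel_measurable P" using L by measurable
  then have "emeasure (mix e (uniform_measure P L) P) W
      = ennreal e * emeasure (uniform_measure P L) W + ennreal (1 - e) * emeasure P W"
    using emeasure_mix_density[OF _ W] by (simp add: uniform_measure_def)
  also have "\<dots> = ennreal ((1 - e) * measure P W)"
    using emeasure_uniform_measure[OF L W] e by (simp add: LW P.emeasure_eq_measure ennreal_mult'')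
  finally have "measure (mix e (uniform_measure P L) P) W = (1 - e) * measure P W"
    using e by (simp add: measure_def)
  then have "Xm i t \<le> (1 - e) * measure P W"
    using worst_case_le[OF Qe bounded_borel_x[OF i t]] integral_x_eq_measure_win_set[OF Qe i t]
    by (simp add: Xm_eq_worst_case W_def)
  also have "\<dots> < measure P W"
    using e pW by (simp add: W_def)
  finally show ?thesis using Xbar_eq_measure_win_set[OF i t] by (simp add: W_def)
qed

lemma AE_Tbar_eq_tw_of_optimal:
  assumes i: "i \<in> {1,2}" and tt: "transfer_rule lo hi tt" and wf: "winner_favored lo hi x tt"
    and U: "\<And>i \<theta>. i \<in> {1,2} \<Longrightarrow> \<theta> \<in> {lo..hi} \<Longrightarrow> Ustar i \<theta> \<le> Umin lo hi D P \<eta> x tt i \<theta>"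
    and opt: "objective P ts \<le> objective P tt"
  shows "AE \<theta> in P. Tbar P tt i \<theta> = tw i \<theta>"
proof -
  have "(\<integral>\<theta>. Tbar P tt i \<theta> \<partial>P) = (\<integral>\<theta>. Tbar P ts i \<theta> \<partial>P)"
    using integral_Tbar_le_tstar[OF _ tt wf U, of 1] integral_Tbar_le_tstar[OF _ tt wf U, of 2] opt i
    by (auto simp: objective_def)
  then have "(\<integral>\<theta>. Tbar P ts i \<theta> - Tbar P tt i \<theta> \<partial>P) = 0"
    using integrable_Tbar[OF tt i] integrable_Tbar[OF transfer_rule_tstar i] by simp
  moreover have "AE \<theta> in P. 0 \<le> Tbar P ts i \<theta> - Tbar P tt i \<theta>"
    using AE_Tbar_le_tw[OF i tt wf U[OF i]] unfolding Tbar_tstar by simp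
  ultimately have "AE \<theta> in P. Tbar P ts i \<theta> - Tbar P tt i \<theta> = 0"
    using integrable_Tbar[OF tt i] integrable_Tbar[OF transfer_rule_tstar i]
    by (subst integral_nonneg_eq_0_iff_AE[symmetric]) auto
  then show ?thesis by eventually_elim (simp add: Tbar_tstar)
qed

lemma AE_win_lose_section_eq_tstar:
  assumes i: "i \<in> {1,2}" and \<theta>: "\<theta> \<in> {lo..hi}" "\<theta> \<noteq> hi"
    and tt: "\<And>s. s \<in> {lo..hi} \<Longrightarrow> tt i \<theta> s = a * x i \<theta> s + b * (1 - x i \<theta> s)" and ab: "- b \<le> \<theta> - a"
    and U: "Umin lo hi D P \<eta> x tt i \<theta> = Ustar i \<theta>" and T: "Tbar P tt i \<theta> = tw i \<theta>"
  shows "AE s in P. tt i \<theta> s = ts i \<theta> s"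
proof -
  interpret P: prob_space P by (rule prob_space_P)
  define W where "W = win_set i \<theta>"
  have tw: "tw i \<theta> = b + (a - b) * Xm i \<theta>"
    using Umin_win_lose[where tt=tt and a=a and b=b, OF i \<theta>(1) tt ab] U by (simp add: tw_eq algebra_simps)
  have "(a - b) * (Xbar P x i \<theta> - Xm i \<theta>) = 0"
    using Tbar_win_lose[where tt=tt and a=a and b=b, OF i \<theta>(1) tt ab] T tw by (simp add: algebra_simps)
  then consider "a = b" | "Xm i \<theta> = Xbar P x i \<theta>" by force
  then show ?thesis
  proof cases
    case 1
    then show ?thesis using tt tw by (intro AE_I2) (simp add: tstar_eq space_P algebra_simps)
  next
    case 2
    have p: "Xbar P x i \<theta> = measure P W" using Xbar_eq_measure_win_set[OF i \<theta>(1)] by (simp add: W_def)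
    have "measure P W \<noteq> 1" using Xbar_one_imp_hi[OF i \<theta>(1)] \<theta>(2) p by auto
    moreover have "\<not> (0 < measure P W \<and> measure P W < 1)"
      using Xm_less_Xbar[OF i \<theta>(1)] 2 p by (auto simp: W_def)
    ultimately have "measure P W = 0"
      using P.prob_le_1[of W] measure_nonneg[of P W] by linarith
    then have "W \<in> null_sets P" and Xm0: "Xm i \<theta> = 0"
      using sets_win_set[OF i \<theta>(1)] 2 p
      by (auto simp: null_sets_def sets_P W_def P.emeasure_eq_measure)
    show ?thesis
      using AE_not_in[OF \<open>W \<in> null_sets P\<close>] AE_x_eq_indicator_win_set[OF P_mem_amb i \<theta>(1)] AE_space
      by eventually_elim (simp add: tt tstar_eq tw Xm0 W_def space_P)
  qed
qed

lemma tstar_unique: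
  assumes tt: "solves_R lo hi D P \<eta> x tt" and i: "i \<in> {1,2}"
  shows "AE z in P \<Otimes>\<^sub>M P. tt i (fst z) (snd z) = ts i (fst z) (snd z)"
proof -
  interpret P: prob_space P by (rule prob_space_P)
  interpret PP: pair_sigma_finite P P by unfold_locales
  have R: "admissible_R lo hi D P \<eta> x tt" and opt: "objective P ts \<le> objective P tt"
    using tt solves_R_tstar admissible_R_tstar by (auto simp: solves_R_def)
  then have tr: "transfer_rule lo hi tt" and wf: "winner_favored lo hi x tt"
    and U: "\<And>j \<theta>. j \<in> {1,2} \<Longrightarrow> \<theta> \<in> {lo..hi} \<Longrightarrow> Umin lo hi D P \<eta> x tt j \<theta> = Ustar j \<theta>"
    by (auto simp: admissible_R_def Theta_def)
  obtain a b :: "nat \<Rightarrow> real \<Rightarrow> real" where wl: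
    "\<And>\<theta> s. \<theta> \<in> {lo..hi} \<Longrightarrow> s \<in> {lo..hi} \<Longrightarrow> tt i \<theta> s = a i \<theta> * x i \<theta> s + b i \<theta> * (1 - x i \<theta> s)"
    "\<And>\<theta>. \<theta> \<in> {lo..hi} \<Longrightarrow> - b i \<theta> \<le> \<theta> - a i \<theta>"
    using R i unfolding admissible_R_def win_lose_dependent_def Theta_def by fastforce
  have "AE \<theta> in P. Tbar P tt i \<theta> = tw i \<theta>"
    by (rule AE_Tbar_eq_tw_of_optimal[OF i tr wf _ opt]) (simp add: U)
  moreover have "AE \<theta> in P. \<theta> \<noteq> hi" using AE_amb_neq[OF P_mem_amb] lo_less_hi by simp
  ultimately have "AE \<theta> in P. AE s in P. tt i \<theta> s = ts i \<theta> s"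
    using AE_space
  proof eventually_elim
    case (elim \<theta>)
    then have "\<theta> \<in> {lo..hi}" by (simp add: space_P)
    with elim show ?case
      using AE_win_lose_section_eq_tstar[OF i _ _ wl U[OF i]] by blast
  qed
  show ?thesis
  proof (rule PP.AE_pair_measure)
    show "{z \<in> space (P \<Otimes>\<^sub>M P). tt i (fst z) (snd z) = ts i (fst z) (snd z)} \<in> sets (P \<Otimes>\<^sub>M P)"
      using borel_measurable_rule_pair[OF tr[unfolded transfer_rule_def] i]
        borel_measurable_rule_pair[OF transfer_rule_tstar[unfolded transfer_rule_def] i]
      by (rule measurable_equality_set)
  qed (simp add: \<open>AE \<theta> in P. AE s in P. tt i \<theta> s = ts i \<theta> s\<close>)
qed

end

theorem proposition4:
  fixes lo hi \<eta> :: real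
    and D :: "real measure \<Rightarrow> real measure \<Rightarrow> ennreal"
    and P :: "real measure"
    and x :: "nat \<Rightarrow> real \<Rightarrow> real \<Rightarrow> real"
  assumes "0 < lo" and "lo < hi"
    and "assumption_D lo hi D"
    and "P \<in> Delta lo hi (BTheta lo hi)" and "atomless P"
    and "0 < \<eta>"
    and "allocation_rule lo hi x"
    and "assumption_X lo hi D P \<eta> x"
  shows "solves_R lo hi D P \<eta> x (tstar lo hi D P \<eta> x)
    \<and> (\<forall>t. solves_R lo hi D P \<eta> x t \<longrightarrow>
          (\<forall>i\<in>{1,2}. AE z in P \<Otimes>\<^sub>M P. t i (fst z) (snd z) = tstar lo hi D P \<eta> x i (fst z) (snd z)))
    \<and> solves_P lo hi D P \<eta> x (tstar lo hi D P \<eta> x)"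
proof -
  interpret transfer_setting lo hi D P \<eta> x
    using assms by unfold_locales
  show ?thesis using solves_R_tstar tstar_unique solves_P_tstar by blast
qed

end
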